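(* Let $m_1,\dots,m_{d+1}$ be positive integers, $n=\sum_{j=1}^{d+1}m_j$, and let $\mathbb{U}_1,\dots,\mathbb{U}_{d+1}$ be subspaces of $\mathbb{R}^n$ with $\dim\mathbb{U}_j=m_j$. Let $\mathcal F$ be the flag manifold of tuples $\mathbb{W}=(\mathbb{W}_1,\dots,\mathbb{W}_{d+1})$ of pairwise orthogonal subspaces of $\mathbb{R}^n$ with $\dim\mathbb{W}_j=m_j$, and define \[ F(\mathbb{W})=\sum_{j=1}^{d+1}\|\tau(\mathbb{U}_j)-\tau(\mathbb{W}_j)\|_F^2,\qquad \tau(\mathbb{W})=2P_{\mathbb{W}}-I_n . \] Consider the following randomized coordinate minimization: start from any $\mathbb{W}^{(0)}\in\mathcal F$; at step $i$, choose a pair $(s_i,t_i)$ uniformly at random (independently) among all pairs $1\le s<t\le d+1$, and obtain $\mathbb{W}^{(i+1)}$ from $\mathbb{W}^{(i)}$ by replacing $(\mathbb{W}_{s_i},\mathbb{W}_{t_i})$ with a minimizer $(\mathbb{X}_{s_i},\mathbb{X}_{t_i})$ of $F$ over all pairs of subspaces of dimensions $m_{s_i},m_{t_i}$ such that $\mathbb{X}_{s_i}\perp\mathbb{X}_{t_i}$ and both are orthogonal to $\mathbb{W}^{(i)}_j$ for every $j\ne s_i,t_i$ (all other components kept fixed). Then, with probability $1$, every cluster point of the sequence $(\mathbb{W}^{(i)})$ (which exists since $\mathcal F$ is compact) is a stationary point of $F$ on $\mathcal F$.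
   Context: $P_{\mathbb{W}}$ denotes the orthogonal projection onto $\mathbb{W}$, so $\tau(\mathbb{W})$ is the symmetric orthogonal matrix with eigenvalue $+1$ on $\mathbb{W}$ and $-1$ on $\mathbb{W}^\perp$. $\|\cdot\|_F$ is the Frobenius norm. A stationary point of $F$ on the manifold $\mathcal F$ is a point where the Riemannian gradient (equivalently, the differential) of $F|_{\mathcal F}$ vanishes. *)

theory Defs
  imports "HOL-Analysis.Analysis" "HOL-Probability.Probability"
begin

definition orth_proj :: "(real^'n) set \<Rightarrow> real^'n \<Rightarrow> real^'n" where
  "orth_proj W x = (THE y. y \<in> W \<and> (\<forall>w\<in>W. inner (x - y) w = 0))"

definition proj_mat :: "(real^'n) set \<Rightarrow> real^'n^'n" where
  "proj_mat W = matrix (orth_proj W)"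

definition tau :: "(real^'n) set \<Rightarrow> real^'n^'n" where
  "tau W = 2 *\<^sub>R proj_mat W - mat 1"

definition frob_norm :: "real^'n^'n \<Rightarrow> real" where
  "frob_norm A = sqrt (\<Sum>i\<in>UNIV. \<Sum>j\<in>UNIV. (A $ i $ j)^2)"

text \<open>The flag manifold: tuples (W_1,...,W_{d+1}) (indices 1..d+1) of pairwise orthogonal
  subspaces with dim W_j = m_j.  Components at other indices are irrelevant.\<close>
definition flags :: "(nat \<Rightarrow> nat) \<Rightarrow> nat \<Rightarrow> (nat \<Rightarrow> (real^'n) set) set" where
  "flags m d = {W. (\<forall>j\<in>{1..d+1}. subspace (W j) \<and> dim (W j) = m j) \<and>
      (\<forall>i\<in>{1..d+1}. \<forall>j\<in>{1..d+1}. i \<noteq> j \<longrightarrow> (\<forall>x\<in>W i. \<forall>y\<in>W j. orthogonal x y))}"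

definition objF :: "(nat \<Rightarrow> (real^'n) set) \<Rightarrow> nat \<Rightarrow> (nat \<Rightarrow> (real^'n) set) \<Rightarrow> real" where
  "objF U d W = (\<Sum>j=1..d+1. (frob_norm (tau (U j) - tau (W j)))^2)"

definition coord_feasible ::
  "(nat \<Rightarrow> nat) \<Rightarrow> nat \<Rightarrow> (nat \<Rightarrow> (real^'n) set) \<Rightarrow> nat \<Rightarrow> nat \<Rightarrow> (nat \<Rightarrow> (real^'n) set) set" where
  "coord_feasible m d W s t = {X \<in> flags m d. \<forall>j. j \<noteq> s \<and> j \<noteq> t \<longrightarrow> X j = W j}"

definition pairs :: "nat \<Rightarrow> (nat \<times> nat) set" where
  "pairs d = {(s,t). 1 \<le> s \<and> s < t \<and> t \<le> d+1}"

definition stationary ::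
  "(nat \<Rightarrow> nat) \<Rightarrow> nat \<Rightarrow> (nat \<Rightarrow> (real^'n) set) \<Rightarrow> (nat \<Rightarrow> (real^'n) set) \<Rightarrow> bool" where
  "stationary m d U W \<longleftrightarrow> W \<in> flags m d \<and>
     (\<forall>\<gamma> :: real \<Rightarrow> nat \<Rightarrow> (real^'n) set.
        (\<forall>x. \<gamma> x \<in> flags m d) \<and> \<gamma> 0 = W \<and>
        (\<forall>j\<in>{1..d+1}. (\<lambda>x. proj_mat (\<gamma> x j)) differentiable (at 0))
        \<longrightarrow> ((\<lambda>x. objF U d (\<gamma> x)) has_real_derivative 0) (at 0))"

definition flag_cluster_point ::
  "(nat \<Rightarrow> nat) \<Rightarrow> nat \<Rightarrow> (nat \<Rightarrow> nat \<Rightarrow> (real^'n) set) \<Rightarrow> (nat \<Rightarrow> (real^'n) set) \<Rightarrow> bool" where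
  "flag_cluster_point m d seq Wc \<longleftrightarrow> Wc \<in> flags m d \<and>
     (\<exists>r. strict_mono r \<and>
        (\<forall>j\<in>{1..d+1}. (\<lambda>k. proj_mat (seq (r k) j)) \<longlonglongrightarrow> proj_mat (Wc j)))"

end

theory Submission
  imports Defs
begin

text \<open>Every step minimizes \<open>F\<close> over the moves of the chosen pair, so \<open>F\<close> decreases along the
  iteration and, being nonnegative, can drop by a fixed \<open>\<delta> > 0\<close> only finitely often. At a flag
  \<open>W\<close> that is not stationary some block \<open>P\<^sub>W\<^sub>s (P\<^sub>U\<^sub>s - P\<^sub>U\<^sub>t) P\<^sub>W\<^sub>t\<close> with \<open>s \<noteq> t\<close> is nonzero;
  reflecting the \<open>s\<close>-th and \<open>t\<close>-th components in a well-chosen hyperplane then lowers \<open>F\<close> by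
  some \<open>\<delta> > 0\<close> uniformly for all flags near \<open>W\<close>. So if \<open>W\<close> were a cluster point, the pair
  \<open>(s, t)\<close> would be \<open>\<delta>\<close>-improving infinitely often. These times are determined by the past, while
  the next pair is drawn independently and uniformly; a Borel--Cantelli argument shows that almost
  surely \<open>(s, t)\<close> is actually drawn at infinitely many of them, contradicting the finiteness of
  the drops.\<close>

section \<open>Matrix algebra\<close>

lemma bounded_bilinear_matrix_matrix_mult:
  "bounded_bilinear ((**) :: real^'m^'n \<Rightarrow> real^'p^'m \<Rightarrow> real^'p^'n)"
  unfolding bilinear_conv_bounded_bilinear[symmetric] bilinear_def
proof (intro conjI allI)
  fix A :: "real^'m^'n" and B :: "real^'p^'m"
  show "linear ((**) A)"
    by (rule linearI) (simp_all add: matrix_add_ldistrib matrix_scalar_ac scalar_matrix_assoc[symmetric])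
  show "linear (\<lambda>A. A ** B)"
    by (rule linearI)
      (simp_all add: matrix_matrix_mult_def vec_eq_iff distrib_right sum.distrib sum_distrib_left mult.assoc)
qed

lemma bounded_bilinear_matrix_vector_mult:
  "bounded_bilinear ((*v) :: real^'m^'n \<Rightarrow> real^'m \<Rightarrow> real^'n)"
  unfolding bilinear_conv_bounded_bilinear[symmetric] bilinear_def
proof (intro conjI allI)
  fix A :: "real^'m^'n" and x :: "real^'m"
  show "linear ((*v) A)"
    by (simp add: matrix_vector_mul_linear)
  show "linear (\<lambda>A. A *v x)"
    by (rule linearI) (simp_all add: matrix_vector_mult_def vec_eq_iff distrib_right sum.distrib sum_distrib_left mult.assoc)
qed

interpretation matrix_mult: bounded_bilinear "(**) :: real^'m^'n \<Rightarrow> real^'p^'m \<Rightarrow> real^'p^'n"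
  by (rule bounded_bilinear_matrix_matrix_mult)

interpretation matrix_vector_mult: bounded_bilinear "(*v) :: real^'m^'n \<Rightarrow> real^'m \<Rightarrow> real^'n"
  by (rule bounded_bilinear_matrix_vector_mult)

lemma bounded_linear_transpose: "bounded_linear (transpose :: real^'m^'n \<Rightarrow> real^'n^'m)"
  unfolding linear_conv_bounded_linear[symmetric]
  by (rule linearI) (simp_all add: transpose_def vec_eq_iff)

lemma inner_matrix_eq_sum: "inner (A::real^'m^'n) B = (\<Sum>i\<in>UNIV. \<Sum>j\<in>UNIV. A$i$j * B$i$j)"
  by (simp add: inner_vec_def)

lemma inner_transpose: "inner (transpose (A::real^'m^'n)) (transpose B) = inner A B"
  unfolding inner_matrix_eq_sum transpose_def by (simp add: sum.swap[of _ "UNIV::'m set"])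

lemma inner_matrix_mult_left: "inner ((A::real^'m^'n) ** (B::real^'p^'m)) C = inner B (transpose A ** C)"
proof -
  have "inner (A ** B) C = (\<Sum>i\<in>UNIV. \<Sum>k\<in>UNIV. \<Sum>j\<in>UNIV. A$i$j * B$j$k * C$i$k)"
    by (simp add: inner_matrix_eq_sum matrix_matrix_mult_def sum_distrib_right)
  also have "\<dots> = (\<Sum>i\<in>UNIV. \<Sum>j\<in>UNIV. \<Sum>k\<in>UNIV. A$i$j * B$j$k * C$i$k)"
    by (rule sum.cong[OF refl], rule sum.swap)
  also have "\<dots> = (\<Sum>j\<in>UNIV. \<Sum>i\<in>UNIV. \<Sum>k\<in>UNIV. A$i$j * B$j$k * C$i$k)"
    by (rule sum.swap)
  also have "\<dots> = (\<Sum>j\<in>UNIV. \<Sum>k\<in>UNIV. \<Sum>i\<in>UNIV. A$i$j * B$j$k * C$i$k)"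
    by (rule sum.cong[OF refl], rule sum.swap)
  also have "\<dots> = inner B (transpose A ** C)"
    by (simp add: inner_matrix_eq_sum matrix_matrix_mult_def transpose_def sum_distrib_left mult_ac)
  finally show ?thesis .
qed

lemma inner_matrix_mult_right: "inner ((A::real^'m^'n) ** (B::real^'p^'m)) C = inner A (C ** transpose B)"
proof -
  have "inner (A ** B) C = (\<Sum>i\<in>UNIV. \<Sum>k\<in>UNIV. \<Sum>j\<in>UNIV. A$i$j * B$j$k * C$i$k)"
    by (simp add: inner_matrix_eq_sum matrix_matrix_mult_def sum_distrib_right)
  also have "\<dots> = (\<Sum>i\<in>UNIV. \<Sum>j\<in>UNIV. \<Sum>k\<in>UNIV. A$i$j * B$j$k * C$i$k)"
    by (rule sum.cong[OF refl], rule sum.swap)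
  also have "\<dots> = inner A (C ** transpose B)"
    by (simp add: inner_matrix_eq_sum matrix_matrix_mult_def transpose_def sum_distrib_left mult_ac)
  finally show ?thesis .
qed

section \<open>Orthogonal projections and flags\<close>

lemma orth_proj_exists:
  fixes W :: "(real^'n) set"
  assumes "subspace W"
  shows "\<exists>y. y \<in> W \<and> (\<forall>w\<in>W. inner (x - y) w = 0)"
proof -
  obtain y z where "y \<in> span W" "\<And>w. w \<in> span W \<Longrightarrow> orthogonal z w" "x = y + z"
    using orthogonal_subspace_decomp_exists by blast
  then show ?thesis
    using assms by (metis add_diff_cancel_left' orthogonal_def span_eq_iff)
qed

lemma orth_proj_unique:
  fixes W :: "(real^'n) set"
  assumes "subspace W" and "y \<in> W" "\<forall>w\<in>W. inner (x - y) w = 0"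
    and "y' \<in> W" "\<forall>w\<in>W. inner (x - y') w = 0"
  shows "y = y'"
proof -
  have "y - y' \<in> W" using assms by (simp add: subspace_diff)
  then have "inner (y - y') (y - y') = inner (x - y') (y - y') - inner (x - y) (y - y')"
    by (simp add: inner_diff_left)
  also have "\<dots> = 0" using assms \<open>y - y' \<in> W\<close> by simp
  finally show ?thesis by simp
qed

lemma orth_proj:
  fixes W :: "(real^'n) set"
  assumes "subspace W"
  shows orth_proj_in: "orth_proj W x \<in> W"
    and orth_proj_orthogonal: "w \<in> W \<Longrightarrow> inner (x - orth_proj W x) w = 0"
proof -
  have "\<exists>!y. y \<in> W \<and> (\<forall>w\<in>W. inner (x - y) w = 0)"
    using orth_proj_exists[OF assms] orth_proj_unique[OF assms] by blast
  from theI'[OF this] show "orth_proj W x \<in> W" "w \<in> W \<Longrightarrow> inner (x - orth_proj W x) w = 0"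
    unfolding orth_proj_def by auto
qed

lemma orth_proj_eqI:
  fixes W :: "(real^'n) set"
  assumes "subspace W" "y \<in> W" "\<And>w. w \<in> W \<Longrightarrow> inner (x - y) w = 0"
  shows "orth_proj W x = y"
  using orth_proj_unique[OF assms(1) orth_proj_in[OF assms(1)] _ assms(2)] orth_proj_orthogonal[OF assms(1)] assms(3)
  by blast

lemma linear_orth_proj:
  fixes W :: "(real^'n) set"
  assumes W: "subspace W"
  shows "linear (orth_proj W)"
proof (rule linearI)
  fix x y
  show "orth_proj W (x + y) = orth_proj W x + orth_proj W y"
  proof (rule orth_proj_eqI[OF W])
    show "orth_proj W x + orth_proj W y \<in> W"
      by (simp add: W orth_proj_in subspace_add)
    fix w assume "w \<in> W"
    then show "inner (x + y - (orth_proj W x + orth_proj W y)) w = 0"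
      using orth_proj_orthogonal[OF W, of w x] orth_proj_orthogonal[OF W, of w y]
      by (simp add: inner_diff_left inner_add_left)
  qed
next
  fix c :: real and x
  show "orth_proj W (c *\<^sub>R x) = c *\<^sub>R orth_proj W x"
  proof (rule orth_proj_eqI[OF W])
    show "c *\<^sub>R orth_proj W x \<in> W"
      by (simp add: W orth_proj_in subspace_scale)
    fix w assume "w \<in> W"
    then show "inner (c *\<^sub>R x - c *\<^sub>R orth_proj W x) w = 0"
      using orth_proj_orthogonal[OF W, of w x] by (simp add: inner_diff_left)
  qed
qed

lemma orth_proj_self: "subspace W \<Longrightarrow> x \<in> W \<Longrightarrow> orth_proj W x = x"
  by (rule orth_proj_eqI) auto

lemma orth_proj_eq_0: "subspace W \<Longrightarrow> (\<And>w. w \<in> W \<Longrightarrow> inner x w = 0) \<Longrightarrow> orth_proj W x = 0"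
  by (rule orth_proj_eqI) (auto simp: subspace_0)

lemma orth_proj_self_adjoint:
  fixes W :: "(real^'n) set"
  assumes W: "subspace W"
  shows "inner (orth_proj W x) y = inner x (orth_proj W y)"
proof -
  have "inner y (orth_proj W x) = inner (orth_proj W y) (orth_proj W x)"
    using orth_proj_orthogonal[OF W orth_proj_in[OF W], of y x] by (simp add: inner_diff_left)
  moreover have "inner x (orth_proj W y) = inner (orth_proj W x) (orth_proj W y)"
    using orth_proj_orthogonal[OF W orth_proj_in[OF W], of x y] by (simp add: inner_diff_left)
  ultimately show ?thesis by (metis inner_commute)
qed

lemma proj_mat_mult_vec:
  fixes W :: "(real^'n) set"
  assumes "subspace W"
  shows "proj_mat W *v x = orth_proj W x"
  unfolding proj_mat_def using linear_orth_proj[OF assms] by (simp add: matrix_works)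

lemma matrix_entry_eq_inner: "(A::real^'n^'m) $ i $ j = inner (A *v axis j 1) (axis i 1)"
  unfolding cart_eq_inner_axis[symmetric]
  by (simp add: matrix_vector_mult_def axis_def if_distrib cong: if_cong)

lemma transpose_proj_mat:
  assumes "subspace W"
  shows "transpose (proj_mat W) = proj_mat (W :: (real^'n) set)"
proof -
  have "proj_mat W $ j $ i = proj_mat W $ i $ j" for i j
    unfolding matrix_entry_eq_inner proj_mat_mult_vec[OF assms]
    using orth_proj_self_adjoint[OF assms, of "axis i 1" "axis j 1"] by (simp add: inner_commute)
  then show ?thesis by (simp add: transpose_def vec_eq_iff)
qed

lemma proj_mat_idem:
  assumes "subspace W"
  shows "proj_mat W ** proj_mat W = proj_mat (W :: (real^'n) set)"
  unfolding matrix_eq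
  by (simp add: matrix_vector_mul_assoc[symmetric] proj_mat_mult_vec[OF assms]
      orth_proj_self[OF assms] orth_proj_in[OF assms])

lemma proj_mat_mult_orthogonal:
  assumes V: "subspace V" and W: "subspace W" and VW: "\<And>x y. x \<in> V \<Longrightarrow> y \<in> W \<Longrightarrow> inner x y = 0"
  shows "proj_mat V ** proj_mat W = (0 :: real^'n^'n)"
  unfolding matrix_eq
proof
  fix x :: "real^'n"
  have "orth_proj V (orth_proj W x) = 0"
    using VW orth_proj_in[OF W] by (intro orth_proj_eq_0[OF V]) (auto simp: inner_commute)
  then show "(proj_mat V ** proj_mat W) *v x = 0 *v x"
    by (simp add: matrix_vector_mul_assoc[symmetric] proj_mat_mult_vec[OF V] proj_mat_mult_vec[OF W])
qed

lemma flagsD: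
  assumes "W \<in> flags m d"
  shows flags_subspace: "j \<in> {1..d+1} \<Longrightarrow> subspace (W j)"
    and flags_dim: "j \<in> {1..d+1} \<Longrightarrow> dim (W j) = m j"
    and flags_orthogonal: "i \<in> {1..d+1} \<Longrightarrow> j \<in> {1..d+1} \<Longrightarrow> i \<noteq> j \<Longrightarrow> x \<in> W i \<Longrightarrow> y \<in> W j \<Longrightarrow> inner x y = 0"
  using assms unfolding flags_def orthogonal_def by auto

lemma proj_mat_flag_mult:
  assumes W: "W \<in> flags m d" and "j \<in> {1..d+1}" "k \<in> {1..d+1}"
  shows "proj_mat (W j) ** proj_mat (W k) = (if j = k then proj_mat (W j) else (0::real^'n^'n))"
proof (cases "j = k")
  case True
  then show ?thesis using assms by (simp add: proj_mat_idem flags_subspace[OF W])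
next
  case False
  then show ?thesis
    using assms flags_orthogonal[OF W] by (simp add: proj_mat_mult_orthogonal flags_subspace[OF W])
qed

lemma flag_orthonormal_union:
  fixes W :: "nat \<Rightarrow> (real^'n) set"
  assumes W: "W \<in> flags m d" and card: "CARD('n) = (\<Sum>j=1..d+1. m j)"
  obtains C where "C \<subseteq> (\<Union>j\<in>{1..d+1}. W j)" "pairwise orthogonal C" "\<And>x. x \<in> C \<Longrightarrow> norm x = 1"
    "finite C" "card C = CARD('n)"
proof -
  let ?I = "{1..d+1::nat}"
  have "\<exists>B. B \<subseteq> W j \<and> pairwise orthogonal B \<and> (\<forall>x\<in>B. norm x = 1) \<and> finite B \<and> card B = m j"
    if j: "j \<in> ?I" for j
  proof -
    obtain B where "B \<subseteq> W j" "pairwise orthogonal B" "\<And>x. x \<in> B \<Longrightarrow> norm x = 1"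
      "independent B" "card B = dim (W j)" "span B = W j"
      by (rule orthonormal_basis_subspace[OF flags_subspace[OF W j]]) (rule that)
    with flags_dim[OF W j] show ?thesis
      by (intro exI[of _ B]) (simp add: finiteI_independent)
  qed
  then obtain B where B: "\<forall>j\<in>?I. B j \<subseteq> W j \<and> pairwise orthogonal (B j) \<and> (\<forall>x\<in>B j. norm x = 1)
      \<and> finite (B j) \<and> card (B j) = m j"
    by (metis bchoice)
  have B_cross: "orthogonal a b" if "i \<in> ?I" "j \<in> ?I" "a \<in> B i" "b \<in> B j" "a \<noteq> b" for i j a b
  proof (cases "i = j")
    case True
    then show ?thesis using that B by (simp add: pairwise_def)
  next
    case False
    then show ?thesis
      unfolding orthogonal_def using that B flags_orthogonal[OF W, of i j a b] by blast
  qed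
  have "B i \<inter> B j = {}" if "i \<in> ?I" "j \<in> ?I" "i \<noteq> j" for i j
  proof -
    have "a = 0" if "a \<in> B i" "a \<in> B j" for a
    proof -
      have "a \<in> W i" "a \<in> W j"
        using that B \<open>i \<in> ?I\<close> \<open>j \<in> ?I\<close> by blast+
      then have "inner a a = 0"
        by (rule flags_orthogonal[OF W \<open>i \<in> ?I\<close> \<open>j \<in> ?I\<close> \<open>i \<noteq> j\<close>])
      then show "a = 0"
        by simp
    qed
    then show ?thesis
      using B \<open>i \<in> ?I\<close> by force
  qed
  then have "card (\<Union>j\<in>?I. B j) = CARD('n)"
    using B card by (simp add: card_UN_disjoint)
  moreover have "pairwise orthogonal (\<Union>j\<in>?I. B j)"
    unfolding pairwise_def using B_cross by blast
  ultimately show ?thesis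
    using B by (intro that[of "\<Union>j\<in>?I. B j"]) auto
qed

text \<open>A nonzero vector orthogonal to all components would extend an orthonormal family of
  \<open>n\<close> vectors.\<close>
lemma flag_orthogonal_eq_0:
  fixes W :: "nat \<Rightarrow> (real^'n) set"
  assumes W: "W \<in> flags m d" and card: "CARD('n) = (\<Sum>j=1..d+1. m j)"
    and y: "\<And>j w. j \<in> {1..d+1} \<Longrightarrow> w \<in> W j \<Longrightarrow> inner y w = 0"
  shows "y = 0"
proof (rule ccontr)
  assume "y \<noteq> 0"
  obtain C where C: "C \<subseteq> (\<Union>j\<in>{1..d+1}. W j)" "pairwise orthogonal C" "\<And>x. x \<in> C \<Longrightarrow> norm x = 1"
    "finite C" "card C = CARD('n)"
    using flag_orthonormal_union[OF W card] by blast
  have y_C: "orthogonal y c" if "c \<in> C" for c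
    using that C(1) y unfolding orthogonal_def by blast
  then have "y \<notin> C"
    using \<open>y \<noteq> 0\<close> orthogonal_self by blast
  then have card_yC: "card (insert y C) = Suc CARD('n)"
    using C by simp
  have "pairwise orthogonal (insert y C)"
    using C(2) y_C by (simp add: pairwise_insert orthogonal_commute)
  moreover have "0 \<notin> insert y C"
    using \<open>y \<noteq> 0\<close> C(3) by force
  ultimately have "independent (insert y C)"
    by (rule pairwise_orthogonal_independent)
  then have "card (insert y C) \<le> CARD('n)"
    using independent_bound[of "insert y C"] by simp
  with card_yC show False by simp
qed

lemma sum_proj_mat_flag:
  fixes W :: "nat \<Rightarrow> (real^'n) set"
  assumes W: "W \<in> flags m d" and card: "CARD('n) = (\<Sum>j=1..d+1. m j)"
  shows "(\<Sum>j=1..d+1. proj_mat (W j)) = mat 1"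
  unfolding matrix_eq
proof
  let ?I = "{1..d+1::nat}"
  fix x :: "real^'n"
  have "inner (x - (\<Sum>j\<in>?I. orth_proj (W j) x)) w = 0" if k: "k \<in> ?I" and w: "w \<in> W k" for k w
  proof -
    have "(\<Sum>j\<in>?I. inner (orth_proj (W j) x) w) = (\<Sum>j\<in>?I. if j = k then inner (orth_proj (W k) x) w else 0)"
      using flags_orthogonal[OF W _ k _ orth_proj_in[OF flags_subspace[OF W]] w] by (intro sum.cong) auto
    also have "\<dots> = inner (orth_proj (W k) x) w"
      using k by simp
    also have "\<dots> = inner x w"
      using orth_proj_self_adjoint[OF flags_subspace[OF W k], of x w] orth_proj_self[OF flags_subspace[OF W k] w]
      by simp
    finally show ?thesis
      by (simp only: inner_diff_left inner_sum_left)
  qed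
  then have "x - (\<Sum>j\<in>?I. orth_proj (W j) x) = 0"
    by (rule flag_orthogonal_eq_0[OF W card])
  moreover have "(\<Sum>j\<in>?I. proj_mat (W j)) *v x = (\<Sum>j\<in>?I. orth_proj (W j) x)"
    unfolding matrix_vector_mult.sum_left
    by (intro sum.cong) (simp_all add: proj_mat_mult_vec flags_subspace[OF W])
  ultimately show "(\<Sum>j\<in>?I. proj_mat (W j)) *v x = mat 1 *v x"
    by simp
qed

section \<open>A sufficient condition for stationarity\<close>

locale orthogonal_resolution =
  fixes I :: "'i set" and P :: "'i \<Rightarrow> real^'n^'n"
  assumes finite_index: "finite I"
    and transpose_P: "j \<in> I \<Longrightarrow> transpose (P j) = P j"
    and P_mult: "j \<in> I \<Longrightarrow> k \<in> I \<Longrightarrow> P j ** P k = (if j = k then P j else 0)"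
    and sum_P: "sum P I = mat 1"

text \<open>\<open>D\<close> is a tangent vector to the manifold of orthogonal resolutions at \<open>P\<close>: the derivative
  at \<open>0\<close> of the identities \<open>P j ** P k = (if j = k then P j else 0)\<close> along a curve through \<open>P\<close>.\<close>
locale resolution_tangent = orthogonal_resolution +
  fixes D :: "'i \<Rightarrow> real^'n^'n"
  assumes transpose_D: "j \<in> I \<Longrightarrow> transpose (D j) = D j"
    and D_mult: "j \<in> I \<Longrightarrow> k \<in> I \<Longrightarrow> D j ** P k + P j ** D k = (if j = k then D j else 0)"
begin

lemma inner_P_D: "j \<in> I \<Longrightarrow> inner (P j) (D j) = 0"
proof -
  assume j: "j \<in> I"
  have PD: "inner (P j ** D j) (P j) = inner (D j) (P j)"
    using inner_matrix_mult_left[of "P j" "D j" "P j"] transpose_P[OF j] P_mult[OF j j] by simp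
  have DP: "inner (D j ** P j) (P j) = inner (D j) (P j)"
    using inner_matrix_mult_right[of "D j" "P j" "P j"] transpose_P[OF j] P_mult[OF j j] by simp
  have "inner (D j) (P j) = inner (D j ** P j + P j ** D j) (P j)"
    using D_mult[OF j j] by simp
  also have "\<dots> = 2 * inner (D j) (P j)"
    by (simp only: inner_add_left PD DP)
  finally show ?thesis by (simp add: inner_commute)
qed

lemma P_D_P: "j \<in> I \<Longrightarrow> P j ** D j ** P j = 0"
proof -
  assume j: "j \<in> I"
  have "P j ** D j = P j ** (D j ** P j + P j ** D j)"
    using D_mult[OF j j] by simp
  also have "\<dots> = P j ** D j ** P j + P j ** D j"
    using P_mult[OF j j] by (simp add: matrix_add_ldistrib matrix_mul_assoc)
  finally show ?thesis by simp
qed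

lemma inner_D_eq_sum_blocks:
  assumes j: "j \<in> I" and A: "transpose A = A"
  shows "inner A (D j) = 2 * (\<Sum>l\<in>I. inner A (P j ** D j ** P l))"
proof -
  have "inner A (D j ** P j) = inner A (P j ** D j)"
    using A transpose_P[OF j] transpose_D[OF j]
    by (metis inner_transpose matrix_transpose_mul)
  moreover have "inner A (D j) = inner A (D j ** P j + P j ** D j)"
    using D_mult[OF j j] by simp
  ultimately have "inner A (D j) = 2 * inner A (P j ** D j)"
    by (simp add: inner_add_right)
  also have "P j ** D j = (\<Sum>l\<in>I. P j ** D j ** P l)"
    using matrix_mult.sum_right[of "P j ** D j" P I] by (simp add: sum_P)
  finally show ?thesis
    by (simp add: inner_sum_right)
qed

lemma block_antisym:
  assumes j: "j \<in> I" and l: "l \<in> I"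
  shows "P l ** D l ** P j = - transpose (P j ** D j ** P l)"
proof (cases "j = l")
  case True
  then show ?thesis using P_D_P[OF j] by (simp add: transpose_def vec_eq_iff)
next
  case False
  have "P l ** D j ** P k = 0" if k: "k \<in> I" "k \<noteq> j" for k
  proof -
    have "D j ** P k = - (P j ** D k)"
      using D_mult[OF j k(1)] k(2) by (simp add: eq_neg_iff_add_eq_0)
    then have "P l ** D j ** P k = - (P l ** P j ** D k)"
      by (simp add: matrix_mul_assoc[symmetric] matrix_mult.minus_right)
    then show ?thesis
      using P_mult[OF l j] False by simp
  qed
  then have "(\<Sum>k\<in>I. P l ** D j ** P k) = P l ** D j ** P j"
    using sum.mono_neutral_left[OF finite_index, of "{j}" "\<lambda>k. P l ** D j ** P k"] j by simp
  have "P l ** D l ** P j = P l ** (D l ** P j)"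
    by (simp add: matrix_mul_assoc)
  also have "D l ** P j = - (P l ** D j)"
    using D_mult[OF l j] False by (simp add: eq_neg_iff_add_eq_0)
  also have "P l ** - (P l ** D j) = - (P l ** D j)"
    using P_mult[OF l l] by (simp add: matrix_mult.minus_right matrix_mul_assoc)
  also have "P l ** D j = (\<Sum>k\<in>I. P l ** D j ** P k)"
    using matrix_mult.sum_right[of "P l ** D j" P I] by (simp add: sum_P)
  also have "\<dots> = P l ** D j ** P j"
    by fact
  also have "\<dots> = transpose (P j ** D j ** P l)"
    by (simp add: matrix_transpose_mul transpose_P[OF j] transpose_P[OF l] transpose_D[OF j] matrix_mul_assoc)
  finally show ?thesis .
qed

text \<open>Up to the factor \<open>-2\<close>, the left-hand side is the derivative of \<open>\<Sum>j. \<parallel>A j - P j\<parallel>\<^sup>2\<close>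
  in direction \<open>D\<close>.\<close>
lemma sum_inner_D_eq_0:
  assumes A: "\<And>j. j \<in> I \<Longrightarrow> transpose (A j) = A j"
    and blocks: "\<And>j l. j \<in> I \<Longrightarrow> l \<in> I \<Longrightarrow> j \<noteq> l \<Longrightarrow> P j ** (A j - A l) ** P l = 0"
  shows "(\<Sum>j\<in>I. inner (A j - P j) (D j)) = 0"
proof -
  let ?M = "\<lambda>j l. P j ** D j ** P l"
  define S where "S = (\<Sum>j\<in>I. \<Sum>l\<in>I. inner (A j) (?M j l))"
  have "S = (\<Sum>j\<in>I. \<Sum>l\<in>I. - inner (A j) (?M l j))"
    unfolding S_def
  proof (intro sum.cong refl)
    fix j l assume "j \<in> I" "l \<in> I"
    then have "inner (A j) (?M j l) = - inner (transpose (A j)) (?M l j)"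
      using block_antisym[of l j] by (simp add: inner_transpose[of "A j", symmetric])
    then show "inner (A j) (?M j l) = - inner (A j) (?M l j)"
      using A[OF \<open>j \<in> I\<close>] by simp
  qed
  also have "\<dots> = - (\<Sum>j\<in>I. \<Sum>l\<in>I. inner (A l) (?M j l))"
    by (subst sum.swap) (simp add: sum_negf)
  finally have "2 * S = (\<Sum>j\<in>I. \<Sum>l\<in>I. inner (A j - A l) (?M j l))"
    unfolding S_def by (simp add: inner_diff_left sum_subtractf)
  also have "\<dots> = 0"
  proof (intro sum.neutral ballI)
    fix j l assume j: "j \<in> I" and l: "l \<in> I"
    show "inner (A j - A l) (?M j l) = 0"
    proof (cases "j = l")
      case False
      have "inner (A j - A l) (?M j l) = inner (P j ** D j) ((A j - A l) ** transpose (P l))"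
        by (simp add: inner_commute[of "A j - A l"] inner_matrix_mult_right)
      also have "\<dots> = inner (D j) (P j ** (A j - A l) ** P l)"
        by (simp add: inner_matrix_mult_left transpose_P[OF j] transpose_P[OF l] matrix_mul_assoc)
      finally show ?thesis using blocks[OF j l False] by simp
    qed simp
  qed
  finally have "S = 0" by simp
  moreover have "(\<Sum>j\<in>I. inner (A j) (D j)) = 2 * S"
    unfolding S_def by (simp add: inner_D_eq_sum_blocks A sum_distrib_left)
  moreover have "(\<Sum>j\<in>I. inner (P j) (D j)) = 0"
    by (simp add: inner_P_D)
  ultimately show ?thesis
    by (simp add: inner_diff_left sum_subtractf)
qed

end

lemma frob_norm_eq_norm: "frob_norm (A::real^'n^'n) = norm A"
  unfolding frob_norm_def norm_eq_sqrt_inner inner_matrix_eq_sum by (simp add: power2_eq_square)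

lemma objF_eq_sum_inner:
  "objF U d W = (\<Sum>j=1..d+1. 4 * inner (proj_mat (U j) - proj_mat (W j)) (proj_mat (U j) - proj_mat (W j :: (real^'n) set)))"
proof -
  have "tau (U j) - tau (W j) = 2 *\<^sub>R (proj_mat (U j) - proj_mat (W j))" for j
    unfolding tau_def by (simp add: scaleR_diff_right)
  then show ?thesis
    unfolding objF_def frob_norm_eq_norm by (simp add: power2_norm_eq_inner)
qed

lemma orthogonal_resolution_flag:
  assumes "W \<in> flags m d" and "CARD('n) = (\<Sum>j=1..d+1. m j)"
  shows "orthogonal_resolution {1..d+1} (\<lambda>j. proj_mat (W j) :: real^'n^'n)"
proof
  show "transpose (proj_mat (W j)) = proj_mat (W j)" if "j \<in> {1..d+1}" for j
    using assms(1) that by (simp add: transpose_proj_mat flags_subspace)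
  show "proj_mat (W j) ** proj_mat (W k) = (if j = k then proj_mat (W j) else 0)"
    if "j \<in> {1..d+1}" "k \<in> {1..d+1}" for j k
    using assms(1) that by (rule proj_mat_flag_mult)
  show "(\<Sum>j=1..d+1. proj_mat (W j)) = mat 1"
    using assms by (rule sum_proj_mat_flag)
qed simp

lemma resolution_tangent_flag_curve:
  fixes \<gamma> :: "real \<Rightarrow> nat \<Rightarrow> (real^'n) set"
  assumes \<gamma>: "\<And>x. \<gamma> x \<in> flags m d" and card: "CARD('n) = (\<Sum>j=1..d+1. m j)"
    and D: "\<And>j. j \<in> {1..d+1} \<Longrightarrow> ((\<lambda>x. proj_mat (\<gamma> x j)) has_vector_derivative D j) (at 0)"
  shows "resolution_tangent {1..d+1} (\<lambda>j. proj_mat (\<gamma> 0 j)) D"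
proof -
  let ?P = "\<lambda>j x. proj_mat (\<gamma> x j)"
  interpret orthogonal_resolution "{1..d+1}" "\<lambda>j. ?P j 0"
    by (rule orthogonal_resolution_flag[OF \<gamma> card])
  show ?thesis
  proof unfold_locales
    fix j k assume j: "j \<in> {1..d+1}" and k: "k \<in> {1..d+1}"
    have "((\<lambda>x. transpose (?P j x)) has_vector_derivative transpose (D j)) (at 0)"
      by (rule bounded_linear.has_vector_derivative[OF bounded_linear_transpose D[OF j]])
    moreover have "(\<lambda>x. transpose (?P j x)) = ?P j"
      using transpose_proj_mat[OF flags_subspace[OF \<gamma> j]] by simp
    ultimately have "(?P j has_vector_derivative transpose (D j)) (at 0)"
      by simp
    then show "transpose (D j) = D j"
      using D[OF j] by (rule vector_derivative_unique_at)
    have "((\<lambda>x. ?P j x ** ?P k x) has_vector_derivative (?P j 0 ** D k + D j ** ?P k 0)) (at 0)"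
      by (rule matrix_mult.has_vector_derivative[OF D[OF j] D[OF k]])
    moreover have "(\<lambda>x. ?P j x ** ?P k x) = (\<lambda>x. if j = k then ?P j x else 0)"
      using proj_mat_flag_mult[OF \<gamma> j k] by simp
    ultimately have "((\<lambda>x. if j = k then ?P j x else 0) has_vector_derivative (?P j 0 ** D k + D j ** ?P k 0)) (at 0)"
      by simp
    moreover have "((\<lambda>x. if j = k then ?P j x else 0) has_vector_derivative (if j = k then D j else 0)) (at 0)"
      using D[OF j] by (cases "j = k") simp_all
    ultimately have "?P j 0 ** D k + D j ** ?P k 0 = (if j = k then D j else 0)"
      by (rule vector_derivative_unique_at)
    then show "D j ** ?P k 0 + ?P j 0 ** D k = (if j = k then D j else 0)"
      by (simp add: add.commute)
  qed
qed

lemma has_real_derivative_objF_curve: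
  fixes \<gamma> :: "real \<Rightarrow> nat \<Rightarrow> (real^'n) set"
  assumes D: "\<And>j. j \<in> {1..d+1} \<Longrightarrow> ((\<lambda>x. proj_mat (\<gamma> x j)) has_vector_derivative D j) (at 0)"
  shows "((\<lambda>x. objF U d (\<gamma> x)) has_real_derivative
    - 8 * (\<Sum>j=1..d+1. inner (proj_mat (U j) - proj_mat (\<gamma> 0 j)) (D j))) (at 0)"
proof -
  let ?E = "\<lambda>j x. proj_mat (U j) - proj_mat (\<gamma> x j)"
  have "((\<lambda>x. 4 * inner (?E j x) (?E j x)) has_real_derivative 4 * (- 2 * inner (?E j 0) (D j))) (at 0)"
    if j: "j \<in> {1..d+1}" for j
  proof -
    have E: "(?E j has_vector_derivative - D j) (at 0)"
      using has_vector_derivative_diff[OF has_vector_derivative_const D[OF j]] by simp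
    have "((\<lambda>x. inner (?E j x) (?E j x)) has_vector_derivative
        (inner (?E j 0) (- D j) + inner (- D j) (?E j 0))) (at 0)"
      by (rule bounded_bilinear.has_vector_derivative[OF bounded_bilinear_inner E E])
    then have "((\<lambda>x. inner (?E j x) (?E j x)) has_real_derivative - 2 * inner (?E j 0) (D j)) (at 0)"
      unfolding has_real_derivative_iff_has_vector_derivative by (simp add: inner_commute)
    then show ?thesis
      by (rule DERIV_cmult)
  qed
  then have "((\<lambda>x. \<Sum>j=1..d+1. 4 * inner (?E j x) (?E j x)) has_real_derivative
      (\<Sum>j=1..d+1. 4 * (- 2 * inner (?E j 0) (D j)))) (at 0)"
    by (rule DERIV_sum)
  moreover have "(\<Sum>j=1..d+1. 4 * (- 2 * inner (?E j 0) (D j))) = - 8 * (\<Sum>j=1..d+1. inner (?E j 0) (D j))"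
    unfolding sum_distrib_left by (rule sum.cong) simp_all
  ultimately show ?thesis
    unfolding objF_eq_sum_inner by (simp only:)
qed

lemma stationary_if_blocks_vanish:
  fixes U W :: "nat \<Rightarrow> (real^'n) set"
  assumes W: "W \<in> flags m d" and card: "CARD('n) = (\<Sum>j=1..d+1. m j)"
    and U: "\<And>j. j \<in> {1..d+1} \<Longrightarrow> subspace (U j)"
    and blocks: "\<And>j l. j \<in> {1..d+1} \<Longrightarrow> l \<in> {1..d+1} \<Longrightarrow> j \<noteq> l \<Longrightarrow>
       proj_mat (W j) ** (proj_mat (U j) - proj_mat (U l)) ** proj_mat (W l) = 0"
  shows "stationary m d U W"
  unfolding stationary_def
proof (intro conjI allI impI W)
  fix \<gamma> :: "real \<Rightarrow> nat \<Rightarrow> (real^'n) set"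
  assume "(\<forall>x. \<gamma> x \<in> flags m d) \<and> \<gamma> 0 = W \<and>
    (\<forall>j\<in>{1..d+1}. (\<lambda>x. proj_mat (\<gamma> x j)) differentiable (at 0))"
  then have \<gamma>: "\<And>x. \<gamma> x \<in> flags m d" and \<gamma>0: "\<gamma> 0 = W"
    and diff: "\<And>j. j \<in> {1..d+1} \<Longrightarrow> (\<lambda>x. proj_mat (\<gamma> x j)) differentiable (at 0)"
    by auto
  define D where "D j = vector_derivative (\<lambda>x. proj_mat (\<gamma> x j)) (at 0)" for j
  have D: "((\<lambda>x. proj_mat (\<gamma> x j)) has_vector_derivative D j) (at 0)" if "j \<in> {1..d+1}" for j
    using diff[OF that] unfolding D_def by (simp add: vector_derivative_works[symmetric])
  interpret resolution_tangent "{1..d+1}" "\<lambda>j. proj_mat (W j)" D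
    using resolution_tangent_flag_curve[OF \<gamma> card D] by (simp add: \<gamma>0)
  have "(\<Sum>j=1..d+1. inner (proj_mat (U j) - proj_mat (W j)) (D j)) = 0"
    using blocks by (intro sum_inner_D_eq_0) (simp_all add: transpose_proj_mat U)
  with has_real_derivative_objF_curve[where U=U and d=d and \<gamma>=\<gamma> and D=D, OF D]
  show "((\<lambda>x. objF U d (\<gamma> x)) has_real_derivative 0) (at 0)"
    unfolding \<gamma>0 by (simp only: mult_zero_right)
qed

section \<open>Improving a flag by a reflection\<close>

definition outer :: "real^'n \<Rightarrow> real^'m \<Rightarrow> real^'m^'n" where
  "outer a b = (\<chi> i j. a$i * b$j)"

lemma outer_mult_vec: "outer a b *v y = (inner b y) *\<^sub>R a"
  by (simp add: outer_def matrix_vector_mult_def vec_eq_iff inner_vec_def sum_distrib_left mult_ac)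

lemma inner_outer_right: "inner M (outer a b) = inner a (M *v b)"
  by (simp add: outer_def inner_matrix_eq_sum matrix_vector_mult_def inner_vec_def sum_distrib_left mult_ac)

lemma inner_outer_outer: "inner (outer a b) (outer c d) = inner a c * inner b d"
  by (simp add: inner_outer_right outer_mult_vec inner_commute)

lemma inner_mult_vec_symmetric: "transpose A = A \<Longrightarrow> inner x (A *v y) = inner y ((A::real^'n^'n) *v x)"
  by (metis dot_lmul_matrix inner_commute transpose_matrix_vector)

definition reflection :: "real^'n \<Rightarrow> real^'n \<Rightarrow> real^'n" where
  "reflection w y = y - (2 * inner w y) *\<^sub>R w"

lemma reflection_reflection: "norm w = 1 \<Longrightarrow> reflection w (reflection w y) = y"
  unfolding reflection_def by (simp add: inner_diff_right power2_norm_eq_inner[symmetric] algebra_simps)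

lemma inner_reflection: "norm w = 1 \<Longrightarrow> inner (reflection w x) (reflection w y) = inner x y"
  unfolding reflection_def
  by (simp add: inner_diff_right inner_diff_left power2_norm_eq_inner[symmetric] algebra_simps inner_commute)

lemma linear_reflection: "linear (reflection w)"
  unfolding reflection_def by (rule linearI) (simp_all add: inner_add_right algebra_simps)

lemma reflection_fixed: "inner w y = 0 \<Longrightarrow> reflection w y = y"
  unfolding reflection_def by simp

lemma inj_reflection: "norm w = 1 \<Longrightarrow> inj (reflection w)"
  by (metis injI reflection_reflection)

lemma subspace_reflection_image: "subspace V \<Longrightarrow> subspace (reflection w ` V)"
  by (rule linear_subspace_image[OF linear_reflection])

lemma dim_reflection_image: "norm w = 1 \<Longrightarrow> dim (reflection w ` V) = dim V"
  by (rule dim_image_eq[OF linear_reflection]) (use inj_reflection in \<open>auto simp: inj_on_def\<close>)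

lemma reflection_image_fixed: "(\<And>y. y \<in> V \<Longrightarrow> inner w y = 0) \<Longrightarrow> reflection w ` V = V"
  by (simp add: reflection_fixed)

lemma orth_proj_reflection_image:
  assumes V: "subspace V" and w: "norm w = 1"
  shows "orth_proj (reflection w ` V) x = reflection w (orth_proj V (reflection w x))"
proof (rule orth_proj_eqI[OF subspace_reflection_image[OF V]])
  show "reflection w (orth_proj V (reflection w x)) \<in> reflection w ` V"
    using orth_proj_in[OF V] by blast
  fix z assume "z \<in> reflection w ` V"
  then obtain v where v: "v \<in> V" "z = reflection w v" by blast
  have "x - reflection w (orth_proj V (reflection w x)) =
      reflection w (reflection w x - orth_proj V (reflection w x))"
    by (simp add: linear_diff[OF linear_reflection] reflection_reflection[OF w])
  then show "inner (x - reflection w (orth_proj V (reflection w x))) z = 0"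
    using orth_proj_orthogonal[OF V v(1)] by (simp add: v(2) inner_reflection[OF w])
qed

text \<open>With \<open>H = I - 2 w w\<^sup>T\<close> and \<open>P w = \<alpha> u\<close>, expanding \<open>H P H\<close> and using \<open>w\<^sup>T P w = \<alpha>\<^sup>2\<close>.\<close>
lemma proj_mat_reflection_image:
  fixes V :: "(real^'n) set"
  assumes V: "subspace V" and w: "norm w = 1" and Pw: "orth_proj V w = \<alpha> *\<^sub>R u" and uw: "inner u w = \<alpha>"
  shows "proj_mat (reflection w ` V) =
    proj_mat V + ((-2*\<alpha>) *\<^sub>R (outer w u + outer u w) + (4*\<alpha>^2) *\<^sub>R outer w w)"
  unfolding matrix_eq
proof
  fix y :: "real^'n"
  have lin: "linear (orth_proj V)" by (rule linear_orth_proj[OF V])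
  have a: "orth_proj V (reflection w y) = orth_proj V y - (2 * inner w y * \<alpha>) *\<^sub>R u"
    unfolding reflection_def using linear_diff[OF lin] linear_scale[OF lin] Pw by simp
  have b: "inner w (orth_proj V y) = \<alpha> * inner u y"
    using orth_proj_self_adjoint[OF V, of w y] Pw by (simp add: inner_commute)
  have "proj_mat (reflection w ` V) *v y = reflection w (orth_proj V (reflection w y))"
    by (simp add: proj_mat_mult_vec[OF subspace_reflection_image[OF V]] orth_proj_reflection_image[OF V w])
  also have "\<dots> = orth_proj V (reflection w y) - (2 * inner w (orth_proj V (reflection w y))) *\<^sub>R w"
    by (simp only: reflection_def[of w "orth_proj V (reflection w y)"])
  also have "\<dots> = orth_proj V y - (2 * inner w y * \<alpha>) *\<^sub>R u
       - (2 * (\<alpha> * inner u y - 2 * inner w y * \<alpha> * \<alpha>)) *\<^sub>R w"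
    unfolding a using uw by (simp add: inner_diff_right b inner_commute)
  also have "\<dots> = (proj_mat V + ((-2*\<alpha>) *\<^sub>R (outer w u + outer u w) + (4*\<alpha>^2) *\<^sub>R outer w w)) *v y"
    by (simp add: matrix_vector_mult_add_rdistrib scaleR_matrix_vector_assoc[symmetric] outer_mult_vec
        proj_mat_mult_vec[OF V] algebra_simps power2_eq_square inner_commute)
  finally show "proj_mat (reflection w ` V) *v y =
      (proj_mat V + ((-2*\<alpha>) *\<^sub>R (outer w u + outer u w) + (4*\<alpha>^2) *\<^sub>R outer w w)) *v y" .
qed

lemma inner_diff_proj_mat_reflection_image:
  fixes V :: "(real^'n) set" and A :: "real^'n^'n"
  assumes V: "subspace V" and u: "u \<in> V" "norm u = 1" and w: "norm w = 1"
    and Pw: "orth_proj V w = \<alpha> *\<^sub>R u" and uw: "inner u w = \<alpha>" and A: "transpose A = A"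
  shows "inner (A - proj_mat (reflection w ` V)) (A - proj_mat (reflection w ` V))
       = inner (A - proj_mat V) (A - proj_mat V) - 2 * (-4*\<alpha> * inner u (A *v w) + 4*\<alpha>^2 * inner w (A *v w))"
proof -
  define E where "E = (-2*\<alpha>) *\<^sub>R (outer w u + outer u w) + (4*\<alpha>^2) *\<^sub>R outer w w"
  define P where "P = proj_mat V"
  have PE: "proj_mat (reflection w ` V) = P + E"
    unfolding P_def E_def by (rule proj_mat_reflection_image[OF V w Pw uw])
  have uu: "inner u u = 1" and ww: "inner w w = 1"
    using u(2) w by (simp_all add: norm_eq_sqrt_inner)
  have wu: "inner w u = \<alpha>" using uw by (simp add: inner_commute)
  have Pu: "P *v u = u" and Pw': "P *v w = \<alpha> *\<^sub>R u"
    unfolding P_def by (simp_all add: proj_mat_mult_vec[OF V] orth_proj_self[OF V u(1)] Pw)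
  have AE: "inner A E = -4*\<alpha> * inner u (A *v w) + 4*\<alpha>^2 * inner w (A *v w)"
    unfolding E_def using inner_mult_vec_symmetric[OF A, of w u]
    by (simp add: inner_add_right inner_outer_right algebra_simps)
  have PE': "inner P E = -4*\<alpha>^2 + 4*\<alpha>^4"
    unfolding E_def
    by (simp add: inner_add_right inner_outer_right Pu Pw' wu uu algebra_simps power2_eq_square power4_eq_xxxx)
  have EE: "inner E E = 8*\<alpha>^2 - 8*\<alpha>^4"
    unfolding E_def
    by (simp add: inner_add_right inner_add_left inner_outer_outer wu uw uu ww algebra_simps
        power2_eq_square power4_eq_xxxx)
  have "inner (A - (P + E)) (A - (P + E)) = inner (A - P) (A - P) - 2 * inner A E + 2 * inner P E + inner E E"
    by (simp add: inner_diff_left inner_diff_right inner_add_left inner_add_right inner_commute algebra_simps)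
  then show ?thesis
    unfolding PE P_def[symmetric] using AE PE' EE by simp
qed

lemma flags_cong: "(\<And>j. j \<in> {1..d+1} \<Longrightarrow> X j = Y j) \<Longrightarrow> X \<in> flags m d \<longleftrightarrow> Y \<in> flags m d"
  unfolding flags_def by simp

lemma reflection_image_flags:
  assumes W: "W \<in> flags m d" and w: "norm w = 1"
  shows "(\<lambda>j. reflection w ` W j) \<in> flags m d"
  unfolding flags_def
proof (intro CollectI conjI ballI impI)
  fix j assume "j \<in> {1..d+1}"
  then show "subspace (reflection w ` W j)" "dim (reflection w ` W j) = m j"
    using W by (simp_all add: subspace_reflection_image flags_subspace dim_reflection_image[OF w] flags_dim)
next
  fix i j x y
  assume "i \<in> {1..d+1}" "j \<in> {1..d+1}" "i \<noteq> j" "x \<in> reflection w ` W i" "y \<in> reflection w ` W j"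
  then show "orthogonal x y"
    using flags_orthogonal[OF W] by (auto simp: orthogonal_def inner_reflection[OF w])
qed

definition pair_gain :: "real^'n^'n \<Rightarrow> real^'n^'n \<Rightarrow> real \<Rightarrow> real \<Rightarrow> real^'n \<Rightarrow> real^'n \<Rightarrow> real" where
  "pair_gain As At \<alpha> \<beta> u v =
     4*\<alpha>^2*\<beta>^2 * (inner v (As *v v) - inner u (As *v u) + inner u (At *v u) - inner v (At *v v))
     - 4*\<alpha>*\<beta>*(1 - 2*\<alpha>^2) * inner u ((As - At) *v v)"

lemma pair_gain_eq:
  assumes As: "transpose As = As" and At: "transpose At = At" and ab: "\<alpha>^2 + \<beta>^2 = 1"
    and w: "w = \<alpha> *\<^sub>R u + \<beta> *\<^sub>R v"
  shows "(-4*\<alpha> * inner u (As *v w) + 4*\<alpha>^2 * inner w (As *v w))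
    + (-4*\<beta> * inner v (At *v w) + 4*\<beta>^2 * inner w (At *v w)) = pair_gain As At \<alpha> \<beta> u v"
proof -
  have "inner v (As *v u) = inner u (As *v v)" "inner v (At *v u) = inner u (At *v v)"
    by (simp_all add: inner_mult_vec_symmetric As At)
  then have "(-4*\<alpha> * inner u (As *v w) + 4*\<alpha>^2 * inner w (As *v w))
      + (-4*\<beta> * inner v (At *v w) + 4*\<beta>^2 * inner w (At *v w))
    = -4*\<alpha>*(\<alpha>*inner u (As *v u) + \<beta>*inner u (As *v v))
      + 4*\<alpha>^2*(\<alpha>^2*inner u (As *v u) + 2*\<alpha>*\<beta>*inner u (As *v v) + \<beta>^2*inner v (As *v v))
      - 4*\<beta>*(\<alpha>*inner u (At *v v) + \<beta>*inner v (At *v v))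
      + 4*\<beta>^2*(\<alpha>^2*inner u (At *v u) + 2*\<alpha>*\<beta>*inner u (At *v v) + \<beta>^2*inner v (At *v v))"
    unfolding w
    by (simp add: matrix_vector_right_distrib matrix_vector_mult_scaleR inner_add_left inner_add_right
        algebra_simps power2_eq_square)
  also have "\<dots> = pair_gain As At \<alpha> \<beta> u v"
    unfolding pair_gain_def using ab
    by (simp add: matrix_vector_mult_diff_rdistrib inner_diff_right) algebra
  finally show ?thesis .
qed

lemma orthonormal_pair_combination:
  assumes u: "norm u = 1" and v: "norm v = 1" and uv: "inner u v = 0" and ab: "\<alpha>^2 + \<beta>^2 = 1"
  shows "norm (\<alpha> *\<^sub>R u + \<beta> *\<^sub>R v) = 1"
    and "inner u (\<alpha> *\<^sub>R u + \<beta> *\<^sub>R v) = \<alpha>" and "inner v (\<alpha> *\<^sub>R u + \<beta> *\<^sub>R v) = \<beta>"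
proof -
  have uu: "inner u u = 1" and vv: "inner v v = 1"
    using u v by (simp_all add: norm_eq_sqrt_inner)
  have "inner (\<alpha> *\<^sub>R u + \<beta> *\<^sub>R v) (\<alpha> *\<^sub>R u + \<beta> *\<^sub>R v) = 1"
    using uv uu vv ab by (simp add: inner_add_left inner_add_right inner_commute power2_eq_square)
  then show "norm (\<alpha> *\<^sub>R u + \<beta> *\<^sub>R v) = 1"
    by (simp add: norm_eq_sqrt_inner)
  show "inner u (\<alpha> *\<^sub>R u + \<beta> *\<^sub>R v) = \<alpha>" "inner v (\<alpha> *\<^sub>R u + \<beta> *\<^sub>R v) = \<beta>"
    using uu vv uv by (simp_all add: inner_add_right inner_commute)
qed

definition reflect_pair :: "real^'n \<Rightarrow> nat \<Rightarrow> nat \<Rightarrow> (nat \<Rightarrow> (real^'n) set) \<Rightarrow> nat \<Rightarrow> (real^'n) set" where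
  "reflect_pair w s t W j = (if j = s \<or> j = t then reflection w ` W j else W j)"

lemma reflect_pair_coord_feasible:
  assumes W: "W \<in> flags m d" and w: "norm w = 1"
    and orth: "\<And>j y. j \<in> {1..d+1} \<Longrightarrow> j \<noteq> s \<Longrightarrow> j \<noteq> t \<Longrightarrow> y \<in> W j \<Longrightarrow> inner w y = 0"
  shows "reflect_pair w s t W \<in> coord_feasible m d W s t"
proof -
  have "reflect_pair w s t W j = reflection w ` W j" if "j \<in> {1..d+1}" for j
    using orth[OF that] by (auto simp: reflect_pair_def reflection_image_fixed)
  then have "reflect_pair w s t W \<in> flags m d"
    using reflection_image_flags[OF W w] flags_cong[of d "reflect_pair w s t W" "\<lambda>j. reflection w ` W j" m]
    by blast
  then show ?thesis
    unfolding coord_feasible_def by (simp add: reflect_pair_def)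
qed

lemma objF_reflect_pair:
  fixes W U :: "nat \<Rightarrow> (real^'n) set"
  assumes W: "W \<in> flags m d" and s: "s \<in> {1..d+1}" and t: "t \<in> {1..d+1}" and st: "s \<noteq> t"
    and u: "u \<in> W s" "norm u = 1" and v: "v \<in> W t" "norm v = 1" and ab: "\<alpha>^2 + \<beta>^2 = 1"
    and U: "\<And>j. j \<in> {1..d+1} \<Longrightarrow> subspace (U j)" and w: "w = \<alpha> *\<^sub>R u + \<beta> *\<^sub>R v"
  shows "objF U d (reflect_pair w s t W) = objF U d W - 8 * pair_gain (proj_mat (U s)) (proj_mat (U t)) \<alpha> \<beta> u v"
proof -
  let ?I = "{1..d+1::nat}"
  define A where "A j = proj_mat (U j)" for j
  define g where "g X j = 4 * inner (A j - proj_mat (X j)) (A j - proj_mat (X j))" for X :: "nat \<Rightarrow> (real^'n) set" and j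
  define Gs where "Gs = -4*\<alpha> * inner u (A s *v w) + 4*\<alpha>^2 * inner w (A s *v w)"
  define Gt where "Gt = -4*\<beta> * inner v (A t *v w) + 4*\<beta>^2 * inner w (A t *v w)"
  have uv: "inner u v = 0"
    using flags_orthogonal[OF W s t st u(1) v(1)] .
  note w_props = orthonormal_pair_combination[OF u(2) v(2) uv ab, folded w]
  have Pw_s: "orth_proj (W s) w = \<alpha> *\<^sub>R u" and Pw_t: "orth_proj (W t) w = \<beta> *\<^sub>R v"
    using W s t st u v
    by (auto simp: w linear_add[OF linear_orth_proj] linear_scale[OF linear_orth_proj] flags_subspace
        orth_proj_self orth_proj_eq_0 flags_orthogonal inner_commute)
  have "g (reflect_pair w s t W) j = g W j - (if j = s then 8 * Gs else 0) - (if j = t then 8 * Gt else 0)"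
    if "j \<in> ?I" for j
    using st inner_diff_proj_mat_reflection_image[OF flags_subspace[OF W s] u w_props(1) Pw_s w_props(2)
        transpose_proj_mat[OF U[OF s]]]
      inner_diff_proj_mat_reflection_image[OF flags_subspace[OF W t] v w_props(1) Pw_t w_props(3)
        transpose_proj_mat[OF U[OF t]]]
    by (auto simp: reflect_pair_def A_def g_def Gs_def Gt_def)
  then have "(\<Sum>j\<in>?I. g (reflect_pair w s t W) j) =
      (\<Sum>j\<in>?I. g W j - (if j = s then 8 * Gs else 0) - (if j = t then 8 * Gt else 0))"
    by (rule sum.cong[OF refl])
  also have "\<dots> = (\<Sum>j\<in>?I. g W j) - 8 * (Gs + Gt)"
    using s t by (simp add: sum_subtractf)
  also have "Gs + Gt = pair_gain (A s) (A t) \<alpha> \<beta> u v"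
    unfolding Gs_def Gt_def A_def
    by (rule pair_gain_eq[OF transpose_proj_mat[OF U[OF s]] transpose_proj_mat[OF U[OF t]] ab w])
  finally show ?thesis
    unfolding objF_eq_sum_inner g_def A_def .
qed

lemma reflection_competitor:
  fixes W U :: "nat \<Rightarrow> (real^'n) set"
  assumes W: "W \<in> flags m d" and s: "s \<in> {1..d+1}" and t: "t \<in> {1..d+1}" and st: "s \<noteq> t"
    and u: "u \<in> W s" "norm u = 1" and v: "v \<in> W t" "norm v = 1" and ab: "\<alpha>^2 + \<beta>^2 = 1"
    and U: "\<And>j. j \<in> {1..d+1} \<Longrightarrow> subspace (U j)"
  shows "\<exists>X\<in>coord_feasible m d W s t.
    objF U d X = objF U d W - 8 * pair_gain (proj_mat (U s)) (proj_mat (U t)) \<alpha> \<beta> u v"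
proof
  let ?w = "\<alpha> *\<^sub>R u + \<beta> *\<^sub>R v"
  have "norm ?w = 1"
    using orthonormal_pair_combination[OF u(2) v(2) flags_orthogonal[OF W s t st u(1) v(1)] ab] by simp
  moreover have "inner ?w y = 0" if "j \<in> {1..d+1}" "j \<noteq> s" "j \<noteq> t" "y \<in> W j" for j y
  proof -
    have "inner u y = 0" "inner v y = 0"
      using flags_orthogonal[OF W s that(1) _ u(1) that(4)] flags_orthogonal[OF W t that(1) _ v(1) that(4)]
        that(2,3) by auto
    then show ?thesis
      by (simp add: inner_add_left)
  qed
  ultimately show "reflect_pair ?w s t W \<in> coord_feasible m d W s t"
    by (rule reflect_pair_coord_feasible[OF W])
  show "objF U d (reflect_pair ?w s t W) =
      objF U d W - 8 * pair_gain (proj_mat (U s)) (proj_mat (U t)) \<alpha> \<beta> u v"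
    by (rule objF_reflect_pair[OF W s t st u v ab U refl])
qed

definition improvable ::
  "(nat \<Rightarrow> nat) \<Rightarrow> nat \<Rightarrow> (nat \<Rightarrow> (real^'n) set) \<Rightarrow> (nat \<Rightarrow> (real^'n) set) \<Rightarrow> nat \<times> nat \<Rightarrow> real \<Rightarrow> bool"
  where "improvable m d U W p \<delta> \<longleftrightarrow>
    (\<exists>X\<in>coord_feasible m d W (fst p) (snd p). objF U d X \<le> objF U d W - \<delta>)"

lemma improvable_swap: "improvable m d U W (t, s) \<delta> = improvable m d U W (s, t) \<delta>"
  unfolding improvable_def coord_feasible_def by (simp add: conj_commute)

lemma improvable_mono: "improvable m d U W p \<delta> \<Longrightarrow> \<delta>' \<le> \<delta> \<Longrightarrow> improvable m d U W p \<delta>'"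
  unfolding improvable_def by force

lemma exists_pair_gain_pos:
  fixes g K :: real
  assumes g: "g \<noteq> 0"
  shows "\<exists>\<alpha> \<beta>. \<alpha>^2 + \<beta>^2 = 1 \<and> 4*\<alpha>^2*\<beta>^2*K - 4*\<alpha>*\<beta>*(1 - 2*\<alpha>^2)*g > 0"
proof -
  define e where "e = min (1/2) (\<bar>g\<bar> / (4 * (\<bar>K\<bar> + 1)))"
  have "0 < e"
    using g by (simp add: e_def)
  moreover have "e \<le> 1/2"
    unfolding e_def by (rule min.cobounded1)
  ultimately have e: "0 < e" "e \<le> 1/2" .
  have "e * \<bar>K\<bar> \<le> \<bar>g\<bar> / (4 * (\<bar>K\<bar> + 1)) * (\<bar>K\<bar> + 1)"
    unfolding e_def by (intro mult_mono) auto
  also have "\<dots> = \<bar>g\<bar> / 4"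
    by (simp add: field_simps add_nonneg_eq_0_iff)
  also have "\<dots> < \<bar>g\<bar> / 2"
    using g by simp
  finally have eK: "e * \<bar>K\<bar> < \<bar>g\<bar> / 2" .
  define \<beta> where "\<beta> = sqrt (1 - e^2)"
  have \<beta>: "0 < \<beta>" "\<beta> \<le> 1" "\<beta>^2 = 1 - e^2"
    using e power_mono[of e "1/2" 2] unfolding \<beta>_def by (auto simp: power2_eq_square)
  define \<alpha> where "\<alpha> = - sgn g * e"
  have \<alpha>: "\<alpha>^2 = e^2" "\<alpha> * g = - e * \<bar>g\<bar>"
    using g unfolding \<alpha>_def by (auto simp: power2_eq_square abs_sgn mult_ac)
  have "\<beta> * (e * \<bar>K\<bar>) \<le> e * \<bar>K\<bar>"
    using e \<beta> by (intro mult_left_le_one_le) auto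
  moreover have "(e * \<beta>) * (- \<bar>K\<bar>) \<le> (e * \<beta>) * K"
    using e \<beta> by (intro mult_left_mono) auto
  ultimately have "- (e * \<bar>K\<bar>) \<le> e * \<beta> * K"
    by (simp add: algebra_simps)
  moreover have "e^2 \<le> 1/4"
    using e power_mono[of e "1/2" 2] by (simp add: power2_eq_square)
  then have "\<bar>g\<bar> * (2 * e^2) \<le> \<bar>g\<bar> * (1/2)"
    by (intro mult_left_mono) auto
  then have "\<bar>g\<bar> / 2 \<le> (1 - 2*e^2) * \<bar>g\<bar>"
    by (simp add: algebra_simps)
  ultimately have pos: "0 < e * \<beta> * K + (1 - 2*e^2) * \<bar>g\<bar>"
    using eK by linarith
  have "4*\<alpha>^2*\<beta>^2*K - 4*\<alpha>*\<beta>*(1 - 2*\<alpha>^2)*g = 4*\<alpha>^2*\<beta>^2*K - 4*\<beta>*(1 - 2*\<alpha>^2)*(\<alpha>*g)"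
    by algebra
  also have "\<dots> = 4 * e * \<beta> * (e * \<beta> * K + (1 - 2*e^2) * \<bar>g\<bar>)"
    unfolding \<alpha> by algebra
  also have "\<dots> > 0"
    using e \<beta> pos by simp
  finally have "4*\<alpha>^2*\<beta>^2*K - 4*\<alpha>*\<beta>*(1 - 2*\<alpha>^2)*g > 0" .
  moreover have "\<alpha>^2 + \<beta>^2 = 1"
    using \<alpha> \<beta> by simp
  ultimately show ?thesis by blast
qed

lemma exists_inner_orth_proj_block:
  fixes V W :: "(real^'n) set"
  assumes V: "subspace V" and W: "subspace W" and block: "proj_mat V ** B ** proj_mat W \<noteq> 0"
  shows "\<exists>a b. inner (orth_proj V a) (B *v orth_proj W b) \<noteq> 0"
proof -
  obtain i j where "(proj_mat V ** B ** proj_mat W) $ i $ j \<noteq> 0"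
    using block by (auto simp: vec_eq_iff)
  moreover have "(proj_mat V ** B ** proj_mat W) $ i $ j = inner (orth_proj V (axis i 1)) (B *v orth_proj W (axis j 1))"
    unfolding matrix_entry_eq_inner
    by (simp add: matrix_vector_mul_assoc[symmetric] proj_mat_mult_vec V W orth_proj_self_adjoint[OF V] inner_commute)
  ultimately show ?thesis by metis
qed

lemma exists_positive_pair_gain:
  fixes V W :: "(real^'n) set"
  assumes V: "subspace V" and W: "subspace W" and block: "proj_mat V ** (As - At) ** proj_mat W \<noteq> 0"
  obtains a b \<alpha> \<beta> where "orth_proj V a \<noteq> 0" "orth_proj W b \<noteq> 0" "\<alpha>^2 + \<beta>^2 = 1"
    "pair_gain As At \<alpha> \<beta> (sgn (orth_proj V a)) (sgn (orth_proj W b)) > 0"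
proof -
  obtain a b where "inner (orth_proj V a) ((As - At) *v orth_proj W b) \<noteq> 0"
    using exists_inner_orth_proj_block[OF V W block] by blast
  then have gain: "inner (sgn (orth_proj V a)) ((As - At) *v sgn (orth_proj W b)) \<noteq> 0"
    and nonzero: "orth_proj V a \<noteq> 0" "orth_proj W b \<noteq> 0"
    by (auto simp: sgn_div_norm matrix_vector_mult_scaleR)
  obtain \<alpha> \<beta> where "\<alpha>^2 + \<beta>^2 = 1" "pair_gain As At \<alpha> \<beta> (sgn (orth_proj V a)) (sgn (orth_proj W b)) > 0"
    unfolding pair_gain_def using exists_pair_gain_pos[OF gain] by blast
  with nonzero show ?thesis
    by (rule that)
qed

text \<open>The unit vectors fed to \<open>reflection_competitor\<close> are the normalized projections of two fixed
  vectors onto the \<open>s\<close>-th and \<open>t\<close>-th components, so the gain depends continuously on the flag.\<close>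
lemma uniform_descent_near_nonstationary:
  fixes Wc :: "nat \<Rightarrow> (real^'n) set" and W :: "nat \<Rightarrow> nat \<Rightarrow> (real^'n) set"
  assumes Wc: "Wc \<in> flags m d" and s: "s \<in> {1..d+1}" and t: "t \<in> {1..d+1}" and st: "s \<noteq> t"
    and U: "\<And>j. j \<in> {1..d+1} \<Longrightarrow> subspace (U j)"
    and block: "proj_mat (Wc s) ** (proj_mat (U s) - proj_mat (U t)) ** proj_mat (Wc t) \<noteq> 0"
    and W: "\<And>k. W k \<in> flags m d"
    and lim_s: "(\<lambda>k. proj_mat (W k s)) \<longlonglongrightarrow> proj_mat (Wc s)"
    and lim_t: "(\<lambda>k. proj_mat (W k t)) \<longlonglongrightarrow> proj_mat (Wc t)"
  shows "\<exists>\<delta>>0. \<forall>\<^sub>F k in sequentially. improvable m d U (W k) (s, t) \<delta>"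
proof -
  define As where "As = proj_mat (U s)"
  define At where "At = proj_mat (U t)"
  obtain a b \<alpha> \<beta> where p0: "orth_proj (Wc s) a \<noteq> 0" and q0: "orth_proj (Wc t) b \<noteq> 0"
    and ab: "\<alpha>^2 + \<beta>^2 = 1" and c: "pair_gain As At \<alpha> \<beta> (sgn (orth_proj (Wc s) a)) (sgn (orth_proj (Wc t) b)) > 0"
    using exists_positive_pair_gain[OF flags_subspace[OF Wc s] flags_subspace[OF Wc t] block]
    unfolding As_def At_def by blast
  define p where "p k = proj_mat (W k s) *v a" for k
  define q where "q k = proj_mat (W k t) *v b" for k
  have p: "p \<longlonglongrightarrow> orth_proj (Wc s) a" and q: "q \<longlonglongrightarrow> orth_proj (Wc t) b"
    using matrix_vector_mult.tendsto[OF lim_s tendsto_const, of a] matrix_vector_mult.tendsto[OF lim_t tendsto_const, of b]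
    unfolding p_def q_def using flags_subspace[OF Wc] s t by (simp_all add: proj_mat_mult_vec)
  define c where "c = pair_gain As At \<alpha> \<beta> (sgn (orth_proj (Wc s) a)) (sgn (orth_proj (Wc t) b))"
  have "(\<lambda>k. pair_gain As At \<alpha> \<beta> (sgn (p k)) (sgn (q k))) \<longlonglongrightarrow> c"
    unfolding c_def pair_gain_def
    by (intro tendsto_intros matrix_vector_mult.tendsto tendsto_sgn p q p0 q0)
  then have "\<forall>\<^sub>F k in sequentially. c / 2 < pair_gain As At \<alpha> \<beta> (sgn (p k)) (sgn (q k))"
    using c unfolding c_def by (intro order_tendstoD) auto
  moreover have "\<forall>\<^sub>F k in sequentially. p k \<noteq> 0" "\<forall>\<^sub>F k in sequentially. q k \<noteq> 0"
    using tendsto_imp_eventually_ne p p0 q q0 by blast+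
  ultimately have "\<forall>\<^sub>F k in sequentially. improvable m d U (W k) (s, t) (4 * c)"
  proof eventually_elim
    case (elim k)
    have "sgn (p k) \<in> W k s" "sgn (q k) \<in> W k t"
      using flags_subspace[OF W] s t
      by (simp_all add: p_def q_def proj_mat_mult_vec sgn_div_norm subspace_scale orth_proj_in)
    moreover have "norm (sgn (p k)) = 1" "norm (sgn (q k)) = 1"
      using elim by (simp_all add: norm_sgn)
    ultimately obtain X where "X \<in> coord_feasible m d (W k) s t"
      and "objF U d X = objF U d (W k) - 8 * pair_gain As At \<alpha> \<beta> (sgn (p k)) (sgn (q k))"
      using reflection_competitor[where U=U, OF W s t st _ _ _ _ ab U] unfolding As_def At_def by blast
    then show ?case
      unfolding improvable_def using elim by force
  qed
  then show ?thesis
    using c unfolding c_def by (intro exI[of _ "4 * c"]) (simp add: c_def)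
qed

section \<open>Recurrence of events under independent choices\<close>

definition nonanticipating :: "(nat \<Rightarrow> 'a stream \<Rightarrow> bool) \<Rightarrow> bool" where
  "nonanticipating E \<longleftrightarrow> (\<forall>i s s'. stake i s = stake i s' \<longrightarrow> E i s = E i s')"

definition shift_events :: "(nat \<Rightarrow> 'a stream \<Rightarrow> bool) \<Rightarrow> 'a \<Rightarrow> nat \<Rightarrow> 'a stream \<Rightarrow> bool" where
  "shift_events E x i s = E (Suc i) (x ## s)"

text \<open>\<open>avoids_first p L M E s\<close>: among the indices \<open>i < L\<close> with \<open>E i s\<close> there are at least \<open>M\<close>,
  and at the first \<open>M\<close> of them the stream \<open>s\<close> differs from \<open>p\<close>.\<close>
fun avoids_first :: "'a \<Rightarrow> nat \<Rightarrow> nat \<Rightarrow> (nat \<Rightarrow> 'a stream \<Rightarrow> bool) \<Rightarrow> 'a stream \<Rightarrow> bool" where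
  "avoids_first p 0 M E s \<longleftrightarrow> M = 0"
| "avoids_first p (Suc L) M E s \<longleftrightarrow> M = 0 \<or>
     (if E 0 s then shd s \<noteq> p \<and> avoids_first p L (M - 1) (shift_events E (shd s)) (stl s)
      else avoids_first p L M (shift_events E (shd s)) (stl s))"

lemma nonanticipating_shift_events:
  assumes "nonanticipating E"
  shows "nonanticipating (shift_events E x)"
  unfolding nonanticipating_def shift_events_def
proof (intro allI impI)
  fix i and s s' :: "'a stream" assume "stake i s = stake i s'"
  then have "stake (Suc i) (x ## s) = stake (Suc i) (x ## s')" by simp
  then show "E (Suc i) (x ## s) = E (Suc i) (x ## s')"
    using assms unfolding nonanticipating_def by blast
qed

lemma nonanticipating_0: "nonanticipating E \<Longrightarrow> E 0 s = E 0 s'"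
  unfolding nonanticipating_def by (metis stake.simps(1))

lemma avoids_first_Suc_eq:
  assumes "nonanticipating E"
  shows "avoids_first p (Suc L) M E =
    (if E 0 (sconst undefined)
     then (\<lambda>s. M = 0 \<or> shd s \<noteq> p \<and> avoids_first p L (M - 1) (shift_events E (shd s)) (stl s))
     else (\<lambda>s. M = 0 \<or> avoids_first p L M (shift_events E (shd s)) (stl s)))"
proof
  fix s
  have "E 0 s = E 0 (sconst undefined)" by (rule nonanticipating_0[OF assms])
  then show "avoids_first p (Suc L) M E s = (if E 0 (sconst undefined)
     then (\<lambda>s. M = 0 \<or> shd s \<noteq> p \<and> avoids_first p L (M - 1) (shift_events E (shd s)) (stl s))
     else (\<lambda>s. M = 0 \<or> avoids_first p L M (shift_events E (shd s)) (stl s))) s"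
    by (simp only: avoids_first.simps(2) if_distrib[of "\<lambda>f. f s"]) simp
qed

lemma measurable_avoids_first:
  fixes N :: "'a::countable pmf"
  assumes "nonanticipating E"
  shows "Measurable.pred (stream_space (measure_pmf N)) (avoids_first p L M E)"
  using assms
proof (induction L arbitrary: M E)
  case 0
  then show ?case by simp
next
  case (Suc L)
  have shd: "shd \<in> measurable (stream_space (measure_pmf N)) (count_space UNIV)"
    using measurable_shd[of "measure_pmf N"] by (simp add: measurable_cong_sets)
  have tail: "Measurable.pred (stream_space (measure_pmf N))
      (\<lambda>s. avoids_first p L M' (shift_events E (shd s)) (stl s))" for M'
    by (rule measurable_compose_countable[OF _ shd])
      (rule measurable_compose[OF measurable_stl Suc.IH[OF nonanticipating_shift_events[OF Suc.prems]]])
  have head: "Measurable.pred (stream_space (measure_pmf N)) (\<lambda>s. shd s \<noteq> p)"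
    using shd by (simp add: pred_intros_logic)
  show ?case
  proof (cases "E 0 (sconst undefined)")
    case True
    show ?thesis
      unfolding avoids_first_Suc_eq[OF Suc.prems] if_P[OF True]
      by (intro pred_intros_logic head tail measurable_const) simp
  next
    case False
    show ?thesis
      unfolding avoids_first_Suc_eq[OF Suc.prems] if_not_P[OF False]
      by (intro pred_intros_logic tail measurable_const) simp
  qed
qed

lemma avoids_first_SucI: "avoids_first p L M E s \<Longrightarrow> avoids_first p (Suc L) M E s"
proof (induction L arbitrary: M E s)
  case (Suc L)
  show ?case
    using Suc.prems Suc.IH
    unfolding avoids_first.simps(2)[of p "Suc L" M E s] avoids_first.simps(2)[of p L M E s]
    by (auto split: if_splits simp del: avoids_first.simps)
qed simp

text \<open>Condition on the first draw: the rest of the stream is a fresh copy, and if \<open>E 0\<close> holds the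
  first draw must avoid \<open>p\<close>, which has probability \<open>1 - pmf N p\<close>.\<close>
lemma emeasure_avoids_first_Suc_le:
  fixes N :: "'a::countable pmf"
  assumes E: "nonanticipating E" and M: "M \<noteq> 0"
    and IH: "\<And>M' x. emeasure (stream_space (measure_pmf N)) {s. avoids_first p L M' (shift_events E x) s}
      \<le> ennreal ((1 - pmf N p) ^ M')"
  shows "emeasure (stream_space (measure_pmf N)) {s. avoids_first p (Suc L) M E s} \<le> ennreal ((1 - pmf N p) ^ M)"
proof -
  let ?S = "stream_space (measure_pmf N)"
  define r where "r = 1 - pmf N p"
  have r: "0 \<le> r" unfolding r_def by (simp add: pmf_le_1)
  have compl_p: "emeasure (measure_pmf N) (- {p}) = ennreal r"
    using measure_pmf.prob_compl[of "{p}" N]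
    by (simp add: measure_pmf.emeasure_eq_measure measure_pmf_single r_def Compl_eq_Diff_UNIV)
  have sets: "{s. avoids_first p (Suc L) M E s} \<in> sets ?S"
    using measurable_avoids_first[OF E, where N=N and p=p and L="Suc L" and M=M]
    by (simp add: Measurable.pred_def space_stream_space)
  have slice: "{x \<in> space ?S. avoids_first p (Suc L) M E (t ## x)} =
      (if E 0 (sconst undefined)
       then (if t = p then {} else {x. avoids_first p L (M - 1) (shift_events E t) x})
       else {x. avoids_first p L M (shift_events E t) x})" for t
    using M unfolding avoids_first_Suc_eq[OF E] by (auto simp: space_stream_space)
  have "emeasure ?S {s. avoids_first p (Suc L) M E s}
      = (\<integral>\<^sup>+t. emeasure ?S {x \<in> space ?S. avoids_first p (Suc L) M E (t ## x)} \<partial>measure_pmf N)"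
    using prob_space.emeasure_stream_space[OF prob_space_measure_pmf sets] by simp
  also have "\<dots> \<le> ennreal (r ^ M)"
  proof (cases "E 0 (sconst undefined)")
    case True
    have "(\<integral>\<^sup>+t. emeasure ?S {x \<in> space ?S. avoids_first p (Suc L) M E (t ## x)} \<partial>measure_pmf N)
        \<le> (\<integral>\<^sup>+t. ennreal (r ^ (M - 1)) * indicator (- {p}) t \<partial>measure_pmf N)"
      using IH unfolding r_def[symmetric] by (intro nn_integral_mono) (simp add: slice True del: avoids_first.simps)
    also have "\<dots> = ennreal (r ^ (M - 1)) * ennreal r"
      by (subst nn_integral_cmult_indicator) (simp_all add: compl_p)
    also have "\<dots> = ennreal (r ^ M)"
      using M r by (simp add: ennreal_mult'[symmetric] power_eq_if mult.commute)
    finally show ?thesis .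
  next
    case False
    have "(\<integral>\<^sup>+t. emeasure ?S {x \<in> space ?S. avoids_first p (Suc L) M E (t ## x)} \<partial>measure_pmf N)
        \<le> (\<integral>\<^sup>+t. ennreal (r ^ M) \<partial>measure_pmf N)"
      using IH unfolding r_def[symmetric] by (intro nn_integral_mono) (simp add: slice False del: avoids_first.simps)
    then show ?thesis by (simp add: measure_pmf.emeasure_space_1)
  qed
  finally show ?thesis unfolding r_def .
qed

lemma emeasure_avoids_first_le:
  fixes N :: "'a::countable pmf"
  assumes "nonanticipating E"
  shows "emeasure (stream_space (measure_pmf N)) {s. avoids_first p L M E s} \<le> ennreal ((1 - pmf N p) ^ M)"
proof -
  interpret S: prob_space "stream_space (measure_pmf N)"
    by (rule prob_space.prob_space_stream_space) (rule prob_space_measure_pmf)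
  show ?thesis
    using assms
  proof (induction L arbitrary: M E)
    case 0
    show ?case by (simp add: S.emeasure_le_1)
  next
    case (Suc L)
    show ?case
    proof (cases "M = 0")
      case True
      then show ?thesis by (simp add: S.emeasure_le_1)
    next
      case False
      then show ?thesis
        by (rule emeasure_avoids_first_Suc_le[OF Suc.prems _ Suc.IH[OF nonanticipating_shift_events[OF Suc.prems]]])
    qed
  qed
qed

lemma avoids_first_if_avoids:
  assumes "\<forall>i. E i s \<longrightarrow> s !! i \<noteq> p" and "M \<le> card ({..<L} \<inter> {i. E i s})"
  shows "avoids_first p L M E s"
  using assms
proof (induction L arbitrary: M E s)
  case 0
  then show ?case by simp
next
  case (Suc L)
  have shift: "shift_events E (shd s) i (stl s) = E (Suc i) s" for i
    by (simp add: shift_events_def)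
  have count: "card ({..<Suc L} \<inter> {i. E i s}) =
      of_bool (E 0 s) + card ({..<L} \<inter> {i. shift_events E (shd s) i (stl s)})"
    using sum.lessThan_Suc_shift[of "\<lambda>i. of_bool (E i s) :: nat" L] by (simp add: shift del: sum.lessThan_Suc)
  have tail: "\<forall>i. shift_events E (shd s) i (stl s) \<longrightarrow> stl s !! i \<noteq> p"
    using Suc.prems(1) by (simp add: shift) (metis snth.simps(2))
  show ?case
  proof (cases "E 0 s")
    case True
    have "shd s \<noteq> p" using Suc.prems(1) True by (metis snth.simps(1))
    moreover have "avoids_first p L (M - 1) (shift_events E (shd s)) (stl s)"
      using Suc.IH[where E="shift_events E (shd s)" and s="stl s", OF tail] Suc.prems(2) True count by simp
    ultimately show ?thesis using True by simp
  next
    case False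
    have "avoids_first p L M (shift_events E (shd s)) (stl s)"
      using Suc.IH[where E="shift_events E (shd s)" and s="stl s", OF tail] Suc.prems(2) False count by simp
    then show ?thesis using False by simp
  qed
qed

lemma infinite_imp_card_lessThan_Int_unbounded:
  fixes S :: "nat set"
  assumes "infinite S"
  shows "\<exists>L. M \<le> card ({..<L} \<inter> S)"
proof -
  obtain B where B: "finite B" "card B = M" "B \<subseteq> S"
    using infinite_arbitrarily_large[OF assms] by blast
  have "B \<subseteq> {..<Suc (Max B)} \<inter> S"
    using B by (auto simp: le_imp_less_Suc)
  then have "M \<le> card ({..<Suc (Max B)} \<inter> S)"
    using B by (metis card_mono finite_Int finite_lessThan)
  then show ?thesis ..
qed

lemma null_sets_avoids_first_forever:
  fixes N :: "'a::countable pmf"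
  assumes "nonanticipating E" and "p \<in> set_pmf N"
  shows "(\<Inter>M. \<Union>L. {s. avoids_first p L M E s}) \<in> null_sets (stream_space (measure_pmf N))"
proof -
  interpret S: prob_space "stream_space (measure_pmf N)"
    by (rule prob_space.prob_space_stream_space) (rule prob_space_measure_pmf)
  let ?X = "\<Inter>M. \<Union>L. {s. avoids_first p L M E s}"
  define r where "r = 1 - pmf N p"
  have r: "0 \<le> r" "r < 1"
    unfolding r_def using assms(2) by (auto simp: pmf_le_1 set_pmf_eq)
  have sets: "{s. avoids_first p L M E s} \<in> sets (stream_space (measure_pmf N))" for L M
    using measurable_avoids_first[OF assms(1), where N=N and p=p and L=L and M=M]
    by (simp add: Measurable.pred_def space_stream_space)
  then have X: "?X \<in> sets (stream_space (measure_pmf N))" by blast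
  have "S.prob ?X \<le> r ^ M" for M
  proof -
    have "emeasure (stream_space (measure_pmf N)) ?X
        \<le> emeasure (stream_space (measure_pmf N)) (\<Union>L. {s. avoids_first p L M E s})"
      by (rule emeasure_mono) (use sets in auto)
    also have "\<dots> = (SUP L. emeasure (stream_space (measure_pmf N)) {s. avoids_first p L M E s})"
      using sets by (intro SUP_emeasure_incseq[symmetric]) (auto intro!: incseq_SucI avoids_first_SucI)
    also have "\<dots> \<le> ennreal (r ^ M)"
      using emeasure_avoids_first_le[OF assms(1)] unfolding r_def by (simp add: SUP_le_iff)
    finally show ?thesis using r by (simp add: S.emeasure_eq_measure)
  qed
  then have "S.prob ?X \<le> 0"
    using r by (intro LIMSEQ_le_const[OF LIMSEQ_power_zero[of r]]) auto
  then have "S.prob ?X = 0"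
    by (intro antisym) simp_all
  with X show ?thesis
    by (simp add: S.emeasure_eq_measure null_sets_def)
qed

text \<open>A conditional Borel--Cantelli argument: each time a nonanticipating event occurs, the
  next draw is still independent of the past and equals \<open>p\<close> with fixed positive probability.\<close>
lemma AE_stream_frequently_hits:
  fixes N :: "'a::countable pmf"
  assumes E: "nonanticipating E" and p: "p \<in> set_pmf N"
  shows "AE s in stream_space (measure_pmf N). (\<exists>\<^sub>\<infinity>i. E i s) \<longrightarrow> (\<exists>\<^sub>\<infinity>i. E i s \<and> s !! i = p)"
proof -
  define E_from where "E_from K i s \<longleftrightarrow> K \<le> i \<and> E i s" for K i s
  have "nonanticipating (E_from K)" for K
    using E unfolding nonanticipating_def E_from_def by blast
  then have null: "(\<Union>K. \<Inter>M. \<Union>L. {s. avoids_first p L M (E_from K) s}) \<in> null_sets (stream_space (measure_pmf N))"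
    by (intro null_sets_UN null_sets_avoids_first_forever p)
  show ?thesis
  proof (rule AE_I'[OF null], intro subsetI)
    fix s
    assume "s \<in> {s \<in> space (stream_space (measure_pmf N)).
      \<not> ((\<exists>\<^sub>\<infinity>i. E i s) \<longrightarrow> (\<exists>\<^sub>\<infinity>i. E i s \<and> s !! i = p))}"
    then have inf: "\<exists>\<^sub>\<infinity>i. E i s" and fin: "\<not> (\<exists>\<^sub>\<infinity>i. E i s \<and> s !! i = p)"
      by simp_all
    obtain K where K: "\<forall>i>K. \<not> (E i s \<and> s !! i = p)"
      using fin unfolding INFM_nat by blast
    have "{i. E i s} \<subseteq> {i. E_from (Suc K) i s} \<union> {..<Suc K}"
      unfolding E_from_def by auto
    with inf have inf_from: "infinite {i. E_from (Suc K) i s}"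
      unfolding INFM_iff_infinite using finite_subset by blast
    have avoid: "\<forall>i. E_from (Suc K) i s \<longrightarrow> s !! i \<noteq> p"
      using K unfolding E_from_def by auto
    have "\<exists>L. avoids_first p L M (E_from (Suc K)) s" for M
    proof -
      obtain L where "M \<le> card ({..<L} \<inter> {i. E_from (Suc K) i s})"
        using infinite_imp_card_lessThan_Int_unbounded[OF inf_from] ..
      with avoid show ?thesis by (blast intro: avoids_first_if_avoids)
    qed
    then show "s \<in> (\<Union>K. \<Inter>M. \<Union>L. {s. avoids_first p L M (E_from K) s})"
      by blast
  qed
qed

lemma AE_PiM_frequently_hits:
  fixes N :: "'a::countable pmf" and E :: "nat \<Rightarrow> (nat \<Rightarrow> 'a) \<Rightarrow> bool"
  assumes E: "\<And>i \<omega> \<omega>'. (\<forall>j<i. \<omega> j = \<omega>' j) \<Longrightarrow> E i \<omega> = E i \<omega>'" and p: "p \<in> set_pmf N"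
  shows "AE \<omega> in PiM UNIV (\<lambda>_. measure_pmf N). (\<exists>\<^sub>\<infinity>i. E i \<omega>) \<longrightarrow> (\<exists>\<^sub>\<infinity>i. E i \<omega> \<and> \<omega> i = p)"
proof -
  have "nonanticipating (\<lambda>i s. E i (snth s))"
    unfolding nonanticipating_def by (metis E stake_nth)
  then have "AE s in stream_space (measure_pmf N).
      (\<exists>\<^sub>\<infinity>i. E i (snth s)) \<longrightarrow> (\<exists>\<^sub>\<infinity>i. E i (snth s) \<and> s !! i = p)"
    by (rule AE_stream_frequently_hits[OF _ p])
  then have "AE \<omega> in PiM UNIV (\<lambda>_. measure_pmf N).
      (\<exists>\<^sub>\<infinity>i. E i (snth (to_stream \<omega>))) \<longrightarrow> (\<exists>\<^sub>\<infinity>i. E i (snth (to_stream \<omega>)) \<and> to_stream \<omega> !! i = p)"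
    by (subst (asm) stream_space_eq_distr) (rule AE_distrD[OF measurable_to_stream])
  moreover have "snth (to_stream \<omega>) = \<omega>" for \<omega> :: "nat \<Rightarrow> 'a"
    by (simp add: to_stream_def fun_eq_iff)
  ultimately show ?thesis by simp
qed

lemma AE_PiM_frequently_hits_all:
  fixes N :: "'a::countable pmf" and E :: "'b::countable \<Rightarrow> nat \<Rightarrow> (nat \<Rightarrow> 'a) \<Rightarrow> bool"
  assumes "\<And>k i \<omega> \<omega>'. (\<forall>j<i. \<omega> j = \<omega>' j) \<Longrightarrow> E k i \<omega> = E k i \<omega>'"
  shows "AE \<omega> in PiM UNIV (\<lambda>_. measure_pmf N). (\<forall>i. \<omega> i \<in> set_pmf N) \<and>
    (\<forall>k. \<forall>p\<in>set_pmf N. (\<exists>\<^sub>\<infinity>i. E k i \<omega>) \<longrightarrow> (\<exists>\<^sub>\<infinity>i. E k i \<omega> \<and> \<omega> i = p))"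
proof (intro AE_conjI)
  have "AE \<omega> in PiM UNIV (\<lambda>_. measure_pmf N). \<omega> i \<in> set_pmf N" for i :: nat
    by (rule AE_PiM_component) (simp_all add: prob_space_measure_pmf AE_measure_pmf)
  then show "AE \<omega> in PiM UNIV (\<lambda>_. measure_pmf N). \<forall>i::nat. \<omega> i \<in> set_pmf N"
    by (simp add: AE_all_countable)
  have "AE \<omega> in PiM UNIV (\<lambda>_. measure_pmf N).
      (\<exists>\<^sub>\<infinity>i. E k i \<omega>) \<longrightarrow> (\<exists>\<^sub>\<infinity>i. E k i \<omega> \<and> \<omega> i = p)"
    if "p \<in> set_pmf N" for k :: 'b and p
    by (rule AE_PiM_frequently_hits[OF assms that])
  then show "AE \<omega> in PiM UNIV (\<lambda>_. measure_pmf N).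
      \<forall>k. \<forall>p\<in>set_pmf N. (\<exists>\<^sub>\<infinity>i. E k i \<omega>) \<longrightarrow> (\<exists>\<^sub>\<infinity>i. E k i \<omega> \<and> \<omega> i = p)"
    unfolding AE_all_countable by (intro allI AE_ball_countable') auto
qed

section \<open>Convergence of randomized coordinate descent\<close>

lemma finite_if_nonneg_descent:
  fixes f :: "nat \<Rightarrow> real"
  assumes nonneg: "\<And>i. 0 \<le> f i" and c: "0 < c"
    and descent: "\<And>i. f (Suc i) + (if B i then c else 0) \<le> f i"
  shows "finite {i. B i}"
proof (rule ccontr)
  assume "infinite {i. B i}"
  have bound: "f L + c * card ({..<L} \<inter> {i. B i}) \<le> f 0" for L
  proof (induction L)
    case (Suc L)
    have "card ({..<Suc L} \<inter> {i. B i}) = card ({..<L} \<inter> {i. B i}) + (if B L then 1 else 0)"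
      by (simp add: lessThan_Suc Int_insert_left)
    then show ?case
      using Suc.IH descent[of L] by (simp add: algebra_simps split: if_splits)
  qed simp
  obtain M :: nat where "f 0 < c * M"
    using reals_Archimedean3[OF c] by (auto simp: mult.commute)
  moreover obtain L where "M \<le> card ({..<L} \<inter> {i. B i})"
    using infinite_imp_card_lessThan_Int_unbounded[OF \<open>infinite _\<close>] by blast
  ultimately show False
    using bound[of L] nonneg[of L] c by (smt (verit) mult_left_mono of_nat_le_iff)
qed

lemma objF_nonneg: "0 \<le> objF U d W"
  unfolding objF_def by (simp add: sum_nonneg)

lemma coordinate_descent_flags:
  assumes "W 0 \<in> flags m d" and "\<And>i. W (Suc i) \<in> coord_feasible m d (W i) (fst (\<omega> i)) (snd (\<omega> i))"
  shows "W i \<in> flags m d"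
  using assms unfolding coord_feasible_def by (induction i) auto

lemma coordinate_descent_rarely_improvable:
  assumes W: "\<And>i. W i \<in> flags m d"
    and step: "\<And>i. W (Suc i) \<in> coord_feasible m d (W i) (fst (\<omega> i)) (snd (\<omega> i)) \<and>
       (\<forall>X\<in>coord_feasible m d (W i) (fst (\<omega> i)) (snd (\<omega> i)). objF U d (W (Suc i)) \<le> objF U d X)"
    and \<delta>: "0 < \<delta>"
    and chosen: "(\<exists>\<^sub>\<infinity>i. improvable m d U (W i) p \<delta>) \<longrightarrow> (\<exists>\<^sub>\<infinity>i. improvable m d U (W i) p \<delta> \<and> \<omega> i = p)"
  shows "\<not> (\<exists>\<^sub>\<infinity>i. improvable m d U (W i) p \<delta>)"
proof -
  have "objF U d (W (Suc i)) + (if improvable m d U (W i) p \<delta> \<and> \<omega> i = p then \<delta> else 0) \<le> objF U d (W i)" for i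
  proof (cases "improvable m d U (W i) p \<delta> \<and> \<omega> i = p")
    case True
    then show ?thesis
      using step[of i] unfolding improvable_def by force
  next
    case False
    have "W i \<in> coord_feasible m d (W i) (fst (\<omega> i)) (snd (\<omega> i))"
      unfolding coord_feasible_def using W by blast
    then show ?thesis
      using step[of i] unfolding if_not_P[OF False] by simp
  qed
  then have "finite {i. improvable m d U (W i) p \<delta> \<and> \<omega> i = p}"
    by (intro finite_if_nonneg_descent[OF objF_nonneg \<delta>])
  then show ?thesis
    using chosen unfolding INFM_iff_infinite by blast
qed

lemma stationary_cluster_point_if_rarely_improvable:
  fixes W :: "nat \<Rightarrow> nat \<Rightarrow> (real^'n) set"
  assumes card: "CARD('n) = (\<Sum>j=1..d+1. m j)" and U: "\<And>j. j \<in> {1..d+1} \<Longrightarrow> subspace (U j)"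
    and W: "\<And>i. W i \<in> flags m d"
    and rare: "\<And>p n. p \<in> pairs d \<Longrightarrow> \<not> (\<exists>\<^sub>\<infinity>i. improvable m d U (W i) p (1 / Suc n))"
    and cluster: "flag_cluster_point m d W Wc"
  shows "stationary m d U Wc"
proof (rule ccontr)
  assume "\<not> stationary m d U Wc"
  moreover obtain r where r: "strict_mono r" and Wc: "Wc \<in> flags m d"
    and lim: "\<And>j. j \<in> {1..d+1} \<Longrightarrow> (\<lambda>k. proj_mat (W (r k) j)) \<longlonglongrightarrow> proj_mat (Wc j)"
    using cluster unfolding flag_cluster_point_def by blast
  ultimately obtain s t where s: "s \<in> {1..d+1}" and t: "t \<in> {1..d+1}" and st: "s \<noteq> t"
    and block: "proj_mat (Wc s) ** (proj_mat (U s) - proj_mat (U t)) ** proj_mat (Wc t) \<noteq> 0"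
    using stationary_if_blocks_vanish[where U=U, OF Wc card U] by blast
  obtain \<delta> where "0 < \<delta>" and improvable_s_t: "\<forall>\<^sub>F k in sequentially. improvable m d U (W (r k)) (s, t) \<delta>"
    using uniform_descent_near_nonstationary[OF Wc s t st U block W lim[OF s] lim[OF t]] by blast
  obtain n where "1 / Suc n < \<delta>"
    using \<open>0 < \<delta>\<close> reals_Archimedean by (auto simp: inverse_eq_divide)
  let ?p = "(min s t, max s t)"
  have often: "\<forall>\<^sub>F k in sequentially. improvable m d U (W (r k)) ?p (1 / Suc n)"
    using improvable_s_t
    by eventually_elim (use \<open>1 / Suc n < \<delta>\<close> in \<open>auto simp: min_def max_def improvable_swap intro: improvable_mono\<close>)
  have "?p \<in> pairs d"
    using s t st by (auto simp: pairs_def)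
  then have "\<forall>\<^sub>F i in sequentially. \<not> improvable m d U (W i) ?p (1 / Suc n)"
    using rare by (simp add: not_frequently cofinite_eq_sequentially)
  then have rarely: "\<forall>\<^sub>F k in sequentially. \<not> improvable m d U (W (r k)) ?p (1 / Suc n)"
    using filterlim_subseq[OF r] by (rule eventually_compose_filterlim)
  from often rarely have "\<forall>\<^sub>F k in sequentially. False"
    by eventually_elim simp
  then show False by simp
qed

lemma coordinate_descent_cluster_point_stationary:
  fixes W :: "nat \<Rightarrow> nat \<Rightarrow> (real^'n) set"
  assumes card: "CARD('n) = (\<Sum>j=1..d+1. m j)" and U: "\<And>j. j \<in> {1..d+1} \<Longrightarrow> subspace (U j)"
    and W0: "W 0 \<in> flags m d"
    and step: "\<And>i. W (Suc i) \<in> coord_feasible m d (W i) (fst (\<omega> i)) (snd (\<omega> i)) \<and>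
       (\<forall>X\<in>coord_feasible m d (W i) (fst (\<omega> i)) (snd (\<omega> i)). objF U d (W (Suc i)) \<le> objF U d X)"
    and chosen: "\<And>p n. p \<in> pairs d \<Longrightarrow> (\<exists>\<^sub>\<infinity>i. improvable m d U (W i) p (1 / Suc n)) \<longrightarrow>
       (\<exists>\<^sub>\<infinity>i. improvable m d U (W i) p (1 / Suc n) \<and> \<omega> i = p)"
    and cluster: "flag_cluster_point m d W Wc"
  shows "stationary m d U Wc"
proof -
  have W: "W i \<in> flags m d" for i
    using coordinate_descent_flags[of W] W0 step by blast
  show ?thesis
  proof (rule stationary_cluster_point_if_rarely_improvable[where U=U, OF card U W _ cluster])
    fix p n assume "p \<in> pairs d"
    then show "\<not> (\<exists>\<^sub>\<infinity>i. improvable m d U (W i) p (1 / Suc n))"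
      using chosen by (intro coordinate_descent_rarely_improvable[where W=W, OF W step]) simp_all
  qed
qed

lemma AE_improvable_pair_chosen:
  fixes Wseq :: "(nat \<Rightarrow> nat \<times> nat) \<Rightarrow> nat \<Rightarrow> nat \<Rightarrow> (real^'n) set"
  assumes d: "d \<ge> 1" and nonanticipating: "\<And>\<omega> \<omega>' i. (\<forall>k<i. \<omega> k = \<omega>' k) \<Longrightarrow> Wseq \<omega> i = Wseq \<omega>' i"
  shows "AE \<omega> in PiM UNIV (\<lambda>_. measure_pmf (pmf_of_set (pairs d))). (\<forall>i. \<omega> i \<in> pairs d) \<and>
    (\<forall>p\<in>pairs d. \<forall>n. (\<exists>\<^sub>\<infinity>i. improvable m d U (Wseq \<omega> i) p (1 / Suc n)) \<longrightarrow>
       (\<exists>\<^sub>\<infinity>i. improvable m d U (Wseq \<omega> i) p (1 / Suc n) \<and> \<omega> i = p))"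
proof -
  have "finite (pairs d)"
    by (rule finite_subset[of _ "{1..d+1} \<times> {1..d+1}"]) (auto simp: pairs_def)
  moreover have "pairs d \<noteq> {}"
    using d by (auto simp: pairs_def intro!: exI[of _ "(1, 2)"])
  ultimately have set_pairs: "set_pmf (pmf_of_set (pairs d)) = pairs d"
    by simp
  let ?E = "\<lambda>(p, n) i \<omega>. improvable m d U (Wseq \<omega> i) p (1 / Suc n)"
  have "AE \<omega> in PiM UNIV (\<lambda>_. measure_pmf (pmf_of_set (pairs d))). (\<forall>i. \<omega> i \<in> pairs d) \<and>
      (\<forall>k. \<forall>p\<in>pairs d. (\<exists>\<^sub>\<infinity>i. ?E k i \<omega>) \<longrightarrow> (\<exists>\<^sub>\<infinity>i. ?E k i \<omega> \<and> \<omega> i = p))"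
  proof (rule AE_PiM_frequently_hits_all[of ?E "pmf_of_set (pairs d)", unfolded set_pairs])
    fix k i and \<omega> \<omega>' :: "nat \<Rightarrow> nat \<times> nat"
    assume "\<forall>j<i. \<omega> j = \<omega>' j"
    then have "Wseq \<omega> i = Wseq \<omega>' i"
      by (rule nonanticipating)
    then show "?E k i \<omega> = ?E k i \<omega>'"
      by (simp add: split_beta)
  qed
  then show ?thesis
    by (rule eventually_mono) (auto simp: split_beta)
qed

theorem theorem6p3:
  fixes m :: "nat \<Rightarrow> nat" and d :: nat
    and U :: "nat \<Rightarrow> (real^'n) set"
    and Wseq :: "(nat \<Rightarrow> nat \<times> nat) \<Rightarrow> nat \<Rightarrow> nat \<Rightarrow> (real^'n) set"
  assumes "d \<ge> 1"
    and "\<forall>j\<in>{1..d+1}. m j > 0"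
    and "CARD('n) = (\<Sum>j=1..d+1. m j)"
    and "\<forall>j\<in>{1..d+1}. subspace (U j) \<and> dim (U j) = m j"
    and "\<forall>\<omega>. Wseq \<omega> 0 \<in> flags m d"
    and "\<forall>\<omega> \<omega>' i. (\<forall>k<i. \<omega> k = \<omega>' k) \<longrightarrow> Wseq \<omega> i = Wseq \<omega>' i"
    and "\<forall>\<omega> i. \<omega> i \<in> pairs d \<longrightarrow>
           Wseq \<omega> (Suc i) \<in> coord_feasible m d (Wseq \<omega> i) (fst (\<omega> i)) (snd (\<omega> i)) \<and>
           (\<forall>X\<in>coord_feasible m d (Wseq \<omega> i) (fst (\<omega> i)) (snd (\<omega> i)).
              objF U d (Wseq \<omega> (Suc i)) \<le> objF U d X)"
  shows "AE \<omega> in PiM UNIV (\<lambda>_. measure_pmf (pmf_of_set (pairs d))).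
           \<forall>Wc. flag_cluster_point m d (Wseq \<omega>) Wc \<longrightarrow> stationary m d U Wc"
proof -
  have "AE \<omega> in PiM UNIV (\<lambda>_. measure_pmf (pmf_of_set (pairs d))). (\<forall>i. \<omega> i \<in> pairs d) \<and>
    (\<forall>p\<in>pairs d. \<forall>n. (\<exists>\<^sub>\<infinity>i. improvable m d U (Wseq \<omega> i) p (1 / Suc n)) \<longrightarrow>
       (\<exists>\<^sub>\<infinity>i. improvable m d U (Wseq \<omega> i) p (1 / Suc n) \<and> \<omega> i = p))"
    using assms(1,6) by (intro AE_improvable_pair_chosen) blast+
  then show ?thesis
  proof (rule eventually_mono, intro allI impI)
    fix \<omega> Wc
    assume "(\<forall>i. \<omega> i \<in> pairs d) \<and>
      (\<forall>p\<in>pairs d. \<forall>n. (\<exists>\<^sub>\<infinity>i. improvable m d U (Wseq \<omega> i) p (1 / Suc n)) \<longrightarrow>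
         (\<exists>\<^sub>\<infinity>i. improvable m d U (Wseq \<omega> i) p (1 / Suc n) \<and> \<omega> i = p))"
      and "flag_cluster_point m d (Wseq \<omega>) Wc"
    then show "stationary m d U Wc"
      using assms(3-5,7) by (intro coordinate_descent_cluster_point_stationary[where \<omega>=\<omega>]) auto
  qed
qed

end
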